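(* For every $X\in\{0,1\}^\infty$, the following are equivalent: (1) there exists a computable learning function that uniformly weakly detects that $X$ is patterned; (2) there exists a polynomial-time computable learning function that uniformly weakly detects that $X$ is patterned.
   Context: A learning function is a function $l:\{0,1\}^*\to\{\mathrm{yes},\mathrm{no}\}$. For $Y\in\{0,1\}^\infty$ and $m\in\mathbb N$, $Y\upharpoonright m$ denotes the length-$m$ prefix of $Y$. $\lambda$ denotes the uniform (Lebesgue) probability measure on $\{0,1\}^\infty$, i.e. $\lambda(\{Y: w\sqsubseteq Y\})=2^{-|w|}$. A learning function $l$ uniformly weakly detects that $X$ is patterned iff (i) $l(X\upharpoonright m)=\mathrm{yes}$ for infinitely many $m\in\mathbb N$, and (ii) for all $n\in\mathbb N$, $\lambda(\{Y\in\{0,1\}^\infty : \#\{m\in\mathbb N: l(Y\upharpoonright m)=\mathrm{yes}\}\ge n\})\le 2^{-n}$. A learning function is polynomial-time computable if some Turing machine computes $l(w)$ in time polynomial in $|w|$. *)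

theory Defs
  imports "HOL-Probability.Probability"
begin

text \<open>Finite binary strings are bool lists; infinite binary sequences are
  functions nat => bool.  A learning function returns True for yes, False for no.\<close>

type_synonym learning_fun = "bool list \<Rightarrow> bool"

definition restr :: "(nat \<Rightarrow> bool) \<Rightarrow> nat \<Rightarrow> bool list" where
  "restr Y m = map Y [0..<m]"

definition lambda_unif :: "(nat \<Rightarrow> bool) measure" where
  "lambda_unif = (\<Pi>\<^sub>M i\<in>(UNIV::nat set). measure_pmf (bernoulli_pmf (1/2)))"

definition uniformly_weakly_detects :: "learning_fun \<Rightarrow> (nat \<Rightarrow> bool) \<Rightarrow> bool" where
  "uniformly_weakly_detects l X \<longleftrightarrow>
     infinite {m. l (restr X m)} \<and>
     (\<forall>n::nat. emeasure lambda_unif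
        {Y \<in> space lambda_unif. \<exists>S. finite S \<and> card S \<ge> n \<and> S \<subseteq> {m. l (restr Y m)}}
        \<le> ennreal ((1/2) ^ n))"

datatype dir = Lft | Rgt | Stay

text \<open>States are 0..<Q; 0 is the start state, 1 the
  accepting (yes) and 2 the rejecting (no) halting state.  Symbols are 0..<S;
  0 is the blank, input bit False is written as 1 and True as 2.\<close>

record tm =
  nstates :: nat
  nsyms :: nat
  delta :: "nat \<Rightarrow> nat \<Rightarrow> nat \<times> nat \<times> dir"

definition wf_tm :: "tm \<Rightarrow> bool" where
  "wf_tm M \<longleftrightarrow> 3 \<le> nstates M \<and> 3 \<le> nsyms M \<and>
     (\<forall>q<nstates M. \<forall>a<nsyms M.
        fst (delta M q a) < nstates M \<and> fst (snd (delta M q a)) < nsyms M)"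

type_synonym config = "nat \<times> (int \<Rightarrow> nat) \<times> int"

definition move :: "dir \<Rightarrow> int" where
  "move d = (case d of Lft \<Rightarrow> -1 | Rgt \<Rightarrow> 1 | Stay \<Rightarrow> 0)"

definition step :: "tm \<Rightarrow> config \<Rightarrow> config" where
  "step M c = (case c of (q, tp, h) \<Rightarrow>
     if q = 1 \<or> q = 2 then c
     else (case delta M q (tp h) of (q', b, d) \<Rightarrow> (q', tp(h := b), h + move d)))"

definition init_config :: "bool list \<Rightarrow> config" where
  "init_config w = (0,
     (\<lambda>i. if 0 \<le> i \<and> i < int (length w) then (if w ! nat i then 2 else 1) else 0), 0)"

definition run :: "tm \<Rightarrow> bool list \<Rightarrow> nat \<Rightarrow> config" where
  "run M w t = (step M ^^ t) (init_config w)"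

definition out_state :: "bool \<Rightarrow> nat" where
  "out_state b = (if b then 1 else 2)"

text \<open>M computes l: on every input it reaches the halting state encoding l w
  (halting states are absorbing, so the output is well defined).\<close>
definition tm_computes :: "tm \<Rightarrow> learning_fun \<Rightarrow> bool" where
  "tm_computes M l \<longleftrightarrow> wf_tm M \<and> (\<forall>w. \<exists>t. fst (run M w t) = out_state (l w))"

definition tm_computes_in_time :: "tm \<Rightarrow> (nat \<Rightarrow> nat) \<Rightarrow> learning_fun \<Rightarrow> bool" where
  "tm_computes_in_time M T l \<longleftrightarrow> wf_tm M \<and>
     (\<forall>w. fst (run M w (T (length w))) = out_state (l w))"

definition computable_lf :: "learning_fun \<Rightarrow> bool" where
  "computable_lf l \<longleftrightarrow> (\<exists>M. tm_computes M l)"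

definition poly_time_computable_lf :: "learning_fun \<Rightarrow> bool" where
  "poly_time_computable_lf l \<longleftrightarrow>
     (\<exists>M c k. tm_computes_in_time M (\<lambda>n. c * (n + 1) ^ k) l)"

end

theory Submission
  imports Defs
begin

text \<open>Given a machine \<open>M\<close> computing a learner \<open>l\<close>, answer yes on \<open>w\<close> iff running \<open>M\<close> on the
  prefixes of \<open>w\<close> one after another, with a total budget of \<open>length w\<close> steps, uses up the
  budget exactly when the run on some prefix halts with answer yes. Along every sequence \<open>Y\<close> the
  yes-positions of this learner are the image of those of \<open>l\<close> under the strictly increasing map
  \<open>k \<mapsto> \<Sum>i\<le>k. (running time of M on Y\<restriction>i)\<close>, so both learners have equally many yes-answers
  on every \<open>Y\<close> and detect the same patterns. The new learner runs in quadratic time: it simulates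
  \<open>length w\<close> steps of \<open>M\<close>, each by a sweep over the \<open>O(length w)\<close> cells in use.\<close>

lemma take_restr: "i \<le> m \<Longrightarrow> take i (restr Y m) = restr Y i"
  by (simp add: restr_def take_map)

lemma length_restr [simp]: "length (restr Y m) = m"
  by (simp add: restr_def)

lemma restr_eq_iff: "length v = m \<Longrightarrow> restr Y m = v \<longleftrightarrow> (\<forall>i<m. Y i = v ! i)"
  unfolding restr_def list_eq_iff_nth_eq by auto
lemma pred_coordinate: "Measurable.pred lambda_unif (\<lambda>Y. Y i = b)"
proof -
  have "Measurable.pred lambda_unif (\<lambda>Y. Y i \<in> {b})"
    unfolding lambda_unif_def
    by (rule pred_sets2[of "{b}" "measure_pmf (bernoulli_pmf (1/2))"])
       (simp, rule measurable_component_singleton, simp)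
  thus ?thesis by simp
qed
lemma pred_restr: "Measurable.pred lambda_unif (\<lambda>Y. P (restr Y m))"
proof -
  have "P (restr Y m) \<longleftrightarrow> (\<exists>v\<in>{v. length v = m \<and> P v}. \<forall>i\<in>{..<m}. Y i = v ! i)" for Y
  proof
    assume "P (restr Y m)"
    then show "\<exists>v\<in>{v. length v = m \<and> P v}. \<forall>i\<in>{..<m}. Y i = v ! i"
      by (intro bexI[of _ "restr Y m"]) (auto simp: restr_def)
  next
    assume "\<exists>v\<in>{v. length v = m \<and> P v}. \<forall>i\<in>{..<m}. Y i = v ! i"
    then obtain v where "length v = m" "P v" "restr Y m = v"
      using restr_eq_iff by auto
    then show "P (restr Y m)" by simp
  qed
  then show ?thesis
    by (simp only:) (intro pred_intros_countable_bounded pred_coordinate)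
qed
lemma sets_many_yes:
  "{Y \<in> space lambda_unif. \<exists>S. finite S \<and> card S \<ge> n \<and> S \<subseteq> {m. l (restr Y m)}} \<in> sets lambda_unif"
proof -
  have "(\<exists>S. finite S \<and> card S \<ge> n \<and> S \<subseteq> {m. l (restr Y m)}) \<longleftrightarrow>
        (\<exists>xs. (distinct xs \<and> n \<le> length xs) \<and> (\<forall>m\<in>set xs. l (restr Y m)))" for Y
  proof
    assume "\<exists>S. finite S \<and> card S \<ge> n \<and> S \<subseteq> {m. l (restr Y m)}"
    then obtain S where "finite S" "card S \<ge> n" "S \<subseteq> {m. l (restr Y m)}" by blast
    moreover obtain xs where "set xs = S" "distinct xs"
      using finite_distinct_list[OF \<open>finite S\<close>] by blast
    ultimately show "\<exists>xs. (distinct xs \<and> n \<le> length xs) \<and> (\<forall>m\<in>set xs. l (restr Y m))"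
      by (intro exI[of _ xs]) (auto simp: distinct_card)
  next
    assume "\<exists>xs. (distinct xs \<and> n \<le> length xs) \<and> (\<forall>m\<in>set xs. l (restr Y m))"
    then obtain xs where "distinct xs" "n \<le> length xs" "\<forall>m\<in>set xs. l (restr Y m)" by blast
    then show "\<exists>S. finite S \<and> card S \<ge> n \<and> S \<subseteq> {m. l (restr Y m)}"
      by (intro exI[of _ "set xs"]) (auto simp: distinct_card)
  qed
  moreover have "Measurable.pred lambda_unif
      (\<lambda>Y. \<exists>xs::nat list. (distinct xs \<and> n \<le> length xs) \<and> (\<forall>m\<in>set xs. l (restr Y m)))"
    by (intro pred_intros_countable pred_intros_conj1' pred_intros_countable_bounded pred_restr)
  ultimately show ?thesis
    by (simp only:) (rule predE)
qed
lemma finite_subset_inj_image_card: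
  assumes "inj g" "finite S" "S \<subseteq> g ` B"
  shows "\<exists>C\<subseteq>B. finite C \<and> card C = card S"
proof -
  from finite_subset_image[OF assms(2,3)]
  obtain C where C: "C \<subseteq> B" "finite C" "S = g ` C" by (elim exE conjE)
  have "card S = card C"
    unfolding C(3) by (rule card_image[OF inj_on_subset[OF assms(1) subset_UNIV]])
  with C show ?thesis by auto
qed

lemma uniformly_weakly_detects_reindex:
  assumes inj: "\<And>Y. inj (g Y)"
    and yes: "\<And>Y. {m. l' (restr Y m)} = g Y ` {m. l (restr Y m)}"
    and det: "uniformly_weakly_detects l X"
  shows "uniformly_weakly_detects l' X"
  unfolding uniformly_weakly_detects_def
proof (intro conjI allI)
  have "infinite {m. l (restr X m)}"
    using det by (simp add: uniformly_weakly_detects_def)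
  then show "infinite {m. l' (restr X m)}"
    unfolding yes by (simp add: finite_image_iff[OF inj_on_subset[OF inj subset_UNIV]])
next
  fix n :: nat
  let ?many = "\<lambda>l. {Y \<in> space lambda_unif. \<exists>S. finite S \<and> card S \<ge> n \<and> S \<subseteq> {m. l (restr Y m)}}"
  have "?many l' \<subseteq> ?many l"
  proof
    fix Y assume "Y \<in> ?many l'"
    then have Y: "Y \<in> space lambda_unif"
      and "\<exists>S. finite S \<and> card S \<ge> n \<and> S \<subseteq> g Y ` {m. l (restr Y m)}"
      by (simp_all add: yes)
    then obtain S where "finite S" "card S \<ge> n" "S \<subseteq> g Y ` {m. l (restr Y m)}"
      by (elim exE conjE)
    moreover from finite_subset_inj_image_card[OF inj this(1,3)]
    obtain C where "C \<subseteq> {m. l (restr Y m)}" "finite C" "card C = card S"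
      by (elim exE conjE)
    ultimately show "Y \<in> ?many l"
      using Y by auto
  qed
  then have "emeasure lambda_unif (?many l') \<le> emeasure lambda_unif (?many l)"
    by (rule emeasure_mono[OF _ sets_many_yes])
  also have "\<dots> \<le> ennreal ((1/2) ^ n)"
    using det by (simp add: uniformly_weakly_detects_def)
  finally show "emeasure lambda_unif (?many l') \<le> ennreal ((1/2) ^ n)" .
qed

lemma step_halted: "fst c = 1 \<or> fst c = 2 \<Longrightarrow> step M c = c"
  by (cases c) (auto simp: step_def)

lemma run_Suc: "run M v (Suc t) = step M (run M v t)"
  by (simp add: run_def)

lemma run_halted_stays: "fst (run M v t) \<in> {1,2} \<Longrightarrow> run M v (t + n) = run M v t"
  by (induction n) (auto simp: run_Suc step_halted)

lemma run_0_state: "fst (run M v 0) = 0"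
  by (simp add: run_def init_config_def)

lemma out_state_halting: "out_state b \<in> {1,2}"
  by (simp add: out_state_def)

definition halt_time :: "tm \<Rightarrow> bool list \<Rightarrow> nat" where
  "halt_time M v = (LEAST t. fst (run M v t) \<in> {1,2})"

definition delayed_lf :: "tm \<Rightarrow> learning_fun \<Rightarrow> learning_fun" where
  "delayed_lf M l w \<longleftrightarrow> (\<exists>k. (\<Sum>i<Suc k. halt_time M (take i w)) = length w \<and> l (take k w))"

definition delay_index :: "tm \<Rightarrow> (nat \<Rightarrow> bool) \<Rightarrow> nat \<Rightarrow> nat" where
  "delay_index M Y k = (\<Sum>i<Suc k. halt_time M (restr Y i))"

context
  fixes M l
  assumes computes: "tm_computes M l"
begin

lemma halts: "\<exists>t. fst (run M v t) \<in> {1,2}"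
  using computes out_state_halting unfolding tm_computes_def by metis

lemma halted_at_halt_time: "fst (run M v (halt_time M v)) \<in> {1,2}"
  unfolding halt_time_def by (rule LeastI_ex[OF halts])

lemma halted_iff_halt_time_le: "fst (run M v t) \<in> {1,2} \<longleftrightarrow> halt_time M v \<le> t"
proof
  assume "fst (run M v t) \<in> {1,2}"
  then show "halt_time M v \<le> t" unfolding halt_time_def by (rule Least_le)
next
  assume "halt_time M v \<le> t"
  then obtain n where "t = halt_time M v + n" using le_Suc_ex by blast
  then show "fst (run M v t) \<in> {1,2}"
    using run_halted_stays[OF halted_at_halt_time] halted_at_halt_time by simp
qed

lemma halt_time_pos: "halt_time M v \<ge> 1"
  using halted_at_halt_time[of v] run_0_state[of M v] by (cases "halt_time M v") auto

lemma output_at_halt_time: "fst (run M v (halt_time M v)) = out_state (l v)"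
proof -
  obtain t where t: "fst (run M v t) = out_state (l v)"
    using computes unfolding tm_computes_def by blast
  then have "halt_time M v \<le> t" using out_state_halting halted_iff_halt_time_le by metis
  then obtain n where "t = halt_time M v + n" using le_Suc_ex by blast
  then show ?thesis using t run_halted_stays[OF halted_at_halt_time] by simp
qed

lemma sum_halt_time_ge: "Suc k \<le> (\<Sum>i<Suc k. halt_time M (v i))"
proof -
  have "(\<Sum>i<Suc k. (1::nat)) \<le> (\<Sum>i<Suc k. halt_time M (v i))"
    by (intro sum_mono halt_time_pos)
  then show ?thesis by simp
qed

lemma strict_mono_delay_index: "strict_mono (delay_index M Y)"
proof (rule strict_monoI_Suc)
  show "delay_index M Y k < delay_index M Y (Suc k)" for k
    using halt_time_pos[of "restr Y (Suc k)"] by (simp add: delay_index_def)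
qed

lemma delayed_lf_restr: "delayed_lf M l (restr Y m) \<longleftrightarrow> (\<exists>k. delay_index M Y k = m \<and> l (restr Y k))"
proof -
  have prefix: "(\<Sum>i<Suc k. halt_time M (take i (restr Y m))) = delay_index M Y k
      \<and> take k (restr Y m) = restr Y k" if "Suc k \<le> m" for k
    unfolding delay_index_def using that by (auto simp: take_restr intro!: sum.cong)
  show ?thesis
    unfolding delayed_lf_def length_restr
    by (metis prefix sum_halt_time_ge delay_index_def)
qed

lemma delayed_lf_yes_set: "{m. delayed_lf M l (restr Y m)} = delay_index M Y ` {k. l (restr Y k)}"
  by (auto simp: delayed_lf_restr)

end

section \<open>A single-tape simulator\<close>

text \<open>The simulator keeps, in every tape cell, the input symbol (\<open>0\<close> blank, \<open>1\<close> for \<open>False\<close>,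
  \<open>2\<close> for \<open>True\<close>) next to a track holding the tape of the simulated run of \<open>M\<close> on the current
  prefix. The flags mark the simulated head, a pending head move to the left, the cells of the
  input already spent as budget (one per simulated step), the origin, the cells of the current
  prefix, and the cells visited so far, so that only cells beyond the used region are blank.\<close>
record cell =
  cell_input :: nat
  cell_sym :: nat
  cell_head :: bool
  cell_left :: bool
  cell_spent :: bool
  cell_origin :: bool
  cell_in_prefix :: bool
  cell_touched :: bool

definition blank_cell :: cell where
  "blank_cell = \<lparr>cell_input = 0, cell_sym = 0, cell_head = False, cell_left = False,
     cell_spent = False, cell_origin = False, cell_in_prefix = False, cell_touched = False\<rparr>"

text \<open>One simulated step of \<open>M\<close> is a left sweep \<open>SweepL q carry\<close> to the left end followed by a right
  sweep \<open>SweepR q done q' carry spent more\<close>: the right sweep applies \<open>M\<close>'s transition at the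
  head cell (\<open>done\<close>, new state \<open>q'\<close>, \<open>carry\<close> moves the head right), spends the first unspent
  input cell (\<open>spent\<close>) and records whether budget remains after it (\<open>more\<close>). A left head move is
  only marked during the right sweep and carried out by the next left sweep. When the budget is
  exhausted the simulator answers with \<open>q'\<close>; when \<open>M\<close> halts earlier, \<open>Rewind\<close> and \<open>Reload\<close> reset
  the simulated tape to the next longer prefix of the input.\<close>
datatype sim_state = Start | Accept | Reject | Rewind | Reload nat | SweepL nat bool
  | SweepR nat bool nat bool bool bool

abbreviation step_start :: "nat \<Rightarrow> sim_state" where
  "step_start q \<equiv> SweepR q False 0 False False False"

definition sweepR_cell :: "tm \<Rightarrow> nat \<Rightarrow> bool \<Rightarrow> nat \<Rightarrow> bool \<Rightarrow> bool \<Rightarrow> bool \<Rightarrow> cell \<Rightarrow> sim_state \<times> cell" where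
  "sweepR_cell M q dn q' ca co mo c =
     (let c1 = (if ca then c\<lparr>cell_head := True\<rparr> else c);
          acts = (\<not> dn \<and> cell_head c);
          r = delta M q (cell_sym c);
          qq = fst r; b = fst (snd r); d = snd (snd r);
          c2 = (if acts then (if d = Rgt then c1\<lparr>cell_sym := b, cell_head := False\<rparr>
                              else if d = Lft then c1\<lparr>cell_sym := b, cell_left := True\<rparr>
                              else c1\<lparr>cell_sym := b\<rparr>)
                else c1);
          fresh = (cell_input c \<noteq> 0 \<and> \<not> cell_spent c);
          c3 = (if fresh \<and> \<not> co then c2\<lparr>cell_spent := True\<rparr> else c2)
      in (SweepR q (dn \<or> acts) (if acts then qq else q') (acts \<and> d = Rgt) (co \<or> fresh)
            (mo \<or> (fresh \<and> co)),
          c3\<lparr>cell_touched := True\<rparr>))"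

text \<open>The argument of \<open>Reload\<close> is \<open>0\<close> left of the origin, \<open>1\<close> inside the prefix and \<open>2\<close> once the
  prefix has been extended by one cell.\<close>
definition reload_cell :: "nat \<Rightarrow> cell \<Rightarrow> sim_state \<times> cell" where
  "reload_cell e c =
     (let e0 = (if cell_origin c \<and> e = 0 then 1 else e);
          extend = (e0 = 1 \<and> \<not> cell_in_prefix c);
          inside = (cell_in_prefix c \<or> extend)
      in (Reload (if extend then 2 else e0),
          c\<lparr>cell_in_prefix := inside, cell_sym := (if inside then cell_input c else 0),
            cell_head := cell_origin c, cell_left := False\<rparr>))"

definition sweepL_cell :: "nat \<Rightarrow> bool \<Rightarrow> cell \<Rightarrow> sim_state \<times> cell" where
  "sweepL_cell q ca c =
     (let c1 = (if ca then c\<lparr>cell_head := True\<rparr> else c) in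
      if cell_left c then (SweepL q True, c1\<lparr>cell_left := False, cell_head := False,
          cell_touched := True\<rparr>)
      else (SweepL q False, c1\<lparr>cell_touched := True\<rparr>))"

fun sim_delta :: "tm \<Rightarrow> sim_state \<Rightarrow> cell \<Rightarrow> sim_state \<times> cell \<times> dir" where
  "sim_delta M Start c = (if c = blank_cell then (Reject, c, Stay)
     else (SweepL 0 False, c\<lparr>cell_origin := True, cell_head := True, cell_touched := True\<rparr>, Lft))"
| "sim_delta M Accept c = (Accept, c, Stay)"
| "sim_delta M Reject c = (Reject, c, Stay)"
| "sim_delta M Rewind c = (if c = blank_cell then (Reload 0, c, Rgt) else (Rewind, c, Lft))"
| "sim_delta M (Reload e) c = (if c = blank_cell then (SweepL 0 False, c, Lft)
     else (fst (reload_cell e c), snd (reload_cell e c), Rgt))"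
| "sim_delta M (SweepL q ca) c = (if c = blank_cell \<and> \<not> ca then (step_start q, c, Rgt)
     else (fst (sweepL_cell q ca c), snd (sweepL_cell q ca c), Lft))"
| "sim_delta M (SweepR q dn q' ca co mo) c = (if c = blank_cell \<and> \<not> ca then
       (if dn \<and> co \<and> \<not> mo then (if q' = 1 then Accept else Reject, c, Stay)
        else if dn \<and> co \<and> (q' = 1 \<or> q' = 2) then (Rewind, c, Lft)
        else if dn \<and> co then (SweepL q' False, c, Lft)
        else (Reject, c, Stay))
     else (fst (sweepR_cell M q dn q' ca co mo c), snd (sweepR_cell M q dn q' ca co mo c), Rgt))"

type_synonym sim_config = "sim_state \<times> (int \<Rightarrow> cell) \<times> int"

definition sim_step :: "tm \<Rightarrow> sim_config \<Rightarrow> sim_config" where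
  "sim_step M cf = (case cf of (\<sigma>, T, h) \<Rightarrow>
     if \<sigma> = Accept \<or> \<sigma> = Reject then cf
     else (case sim_delta M \<sigma> (T h) of (\<sigma>', c', d) \<Rightarrow> (\<sigma>', T(h := c'), h + move d)))"

section \<open>Encoding the simulator as a machine\<close>

definition cell_flags :: "cell \<Rightarrow> nat" where
  "cell_flags c = of_bool (cell_head c) + 2 * (of_bool (cell_left c) + 2 * (of_bool (cell_spent c)
     + 2 * (of_bool (cell_origin c) + 2 * (of_bool (cell_in_prefix c) + 2 * of_bool (cell_touched c)))))"

definition enc_cell :: "nat \<Rightarrow> cell \<Rightarrow> nat" where
  "enc_cell S c = cell_input c + 3 * (cell_sym c + S * cell_flags c)"

definition dec_cell :: "nat \<Rightarrow> nat \<Rightarrow> cell" where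
  "dec_cell S n = (let f = n div 3 div S in
     \<lparr>cell_input = n mod 3, cell_sym = n div 3 mod S, cell_head = odd f, cell_left = odd (f div 2),
      cell_spent = odd (f div 4), cell_origin = odd (f div 8), cell_in_prefix = odd (f div 16),
      cell_touched = odd (f div 32)\<rparr>)"

definition valid_cell :: "nat \<Rightarrow> cell \<Rightarrow> bool" where
  "valid_cell S c \<longleftrightarrow> cell_input c < 3 \<and> cell_sym c < S"

lemma cell_flags_less: "cell_flags c < 64"
  unfolding cell_flags_def
  by (cases "cell_head c"; cases "cell_left c"; cases "cell_spent c"; cases "cell_origin c";
      cases "cell_in_prefix c"; cases "cell_touched c") auto

lemma cell_flags_bits:
  "odd (cell_flags c) = cell_head c" "odd (cell_flags c div 2) = cell_left c"
  "odd (cell_flags c div 4) = cell_spent c" "odd (cell_flags c div 8) = cell_origin c"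
  "odd (cell_flags c div 16) = cell_in_prefix c" "odd (cell_flags c div 32) = cell_touched c"
  unfolding cell_flags_def
  by (cases "cell_head c"; cases "cell_left c"; cases "cell_spent c"; cases "cell_origin c";
      cases "cell_in_prefix c"; cases "cell_touched c"; simp)+

lemma add_mult_mod_div: "(a::nat) < b \<Longrightarrow> (a + b * x) mod b = a \<and> (a + b * x) div b = x"
  by simp

lemma dec_enc_cell:
  assumes "valid_cell S c"
  shows "dec_cell S (enc_cell S c) = c"
proof -
  have "cell_input c < 3" "cell_sym c < S"
    using assms by (simp_all add: valid_cell_def)
  then have digits: "enc_cell S c mod 3 = cell_input c" "enc_cell S c div 3 = cell_sym c + S * cell_flags c"
    "(cell_sym c + S * cell_flags c) mod S = cell_sym c" "(cell_sym c + S * cell_flags c) div S = cell_flags c"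
    unfolding enc_cell_def by (simp_all only: add_mult_mod_div)
  show ?thesis
    unfolding dec_cell_def Let_def digits cell_flags_bits by simp
qed

lemma enc_cell_less:
  assumes "valid_cell S c"
  shows "enc_cell S c < 3 * S * 64"
proof -
  have input: "cell_input c < 3" and "cell_sym c < S"
    using assms by (simp_all add: valid_cell_def)
  moreover have "S * cell_flags c \<le> S * 63"
    using cell_flags_less[of c] by simp
  ultimately have "cell_sym c + S * cell_flags c + 1 \<le> S * 64"
    by linarith
  moreover have "a < 3 \<Longrightarrow> x + 1 \<le> y \<Longrightarrow> a + 3 * x < 3 * y" for a x y :: nat
    by simp
  ultimately show ?thesis
    using input unfolding enc_cell_def by (simp add: mult.assoc)
qed

lemma valid_dec_cell: "S > 0 \<Longrightarrow> valid_cell S (dec_cell S n)"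
  by (simp add: dec_cell_def valid_cell_def Let_def)

definition sweep_flags :: "bool \<Rightarrow> bool \<Rightarrow> bool \<Rightarrow> bool \<Rightarrow> nat" where
  "sweep_flags a b c d = of_bool a + 2 * (of_bool b + 2 * (of_bool c + 2 * of_bool d))"

lemma sweep_flags_less: "sweep_flags a b c d < 16"
  unfolding sweep_flags_def by (cases a; cases b; cases c; cases d) auto

lemma sweep_flags_bits:
  "odd (sweep_flags a b c d) = a" "odd (sweep_flags a b c d div 2) = b"
  "odd (sweep_flags a b c d div 4) = c" "odd (sweep_flags a b c d div 8) = d"
  unfolding sweep_flags_def by (cases a; cases b; cases c; cases d; simp)+

text \<open>The codes \<open>1\<close> and \<open>2\<close> of \<open>Accept\<close> and \<open>Reject\<close> are the halting states of a \<open>tm\<close>.\<close>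
fun enc_state :: "nat \<Rightarrow> sim_state \<Rightarrow> nat" where
  "enc_state Q Start = 0"
| "enc_state Q Accept = 1"
| "enc_state Q Reject = 2"
| "enc_state Q Rewind = 3"
| "enc_state Q (Reload e) = 4 + e"
| "enc_state Q (SweepL q ca) = 7 + q + Q * of_bool ca"
| "enc_state Q (SweepR q dn q' ca co mo) = 7 + 2 * Q + (q + Q * (q' + Q * sweep_flags dn ca co mo))"

definition dec_state :: "nat \<Rightarrow> nat \<Rightarrow> sim_state" where
  "dec_state Q n =
     (if n = 0 then Start else if n = 1 then Accept else if n = 2 then Reject else if n = 3 then Rewind
      else if n < 7 then Reload (n - 4)
      else if n < 7 + 2 * Q then SweepL ((n - 7) mod Q) ((n - 7) div Q = 1)
      else (let r = n - 7 - 2 * Q; f = r div Q div Q in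
        SweepR (r mod Q) (odd f) (r div Q mod Q) (odd (f div 2)) (odd (f div 4)) (odd (f div 8))))"

fun valid_state :: "nat \<Rightarrow> sim_state \<Rightarrow> bool" where
  "valid_state Q (Reload e) = (e < 3)"
| "valid_state Q (SweepL q ca) = (q < Q)"
| "valid_state Q (SweepR q dn q' ca co mo) = (q < Q \<and> q' < Q)"
| "valid_state Q _ = True"

lemma dec_enc_state:
  assumes "valid_state Q s"
  shows "dec_state Q (enc_state Q s) = s"
proof (cases s)
  case (SweepL q ca)
  then show ?thesis using assms by (cases ca) (auto simp: dec_state_def)
next
  case (SweepR q dn q' ca co mo)
  have Q: "q < Q" "q' < Q" using assms SweepR by auto
  let ?f = "sweep_flags dn ca co mo"
  let ?r = "q + Q * (q' + Q * ?f)"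
  have "?r mod Q = q" "?r div Q = q' + Q * ?f" "(q' + Q * ?f) mod Q = q'" "(q' + Q * ?f) div Q = ?f"
    using Q by simp_all
  moreover have "\<not> 7 + 2 * Q + ?r < 7 + 2 * Q" "\<not> 7 + 2 * Q + ?r < 7" by simp_all
  ultimately show ?thesis
    unfolding SweepR enc_state.simps dec_state_def Let_def by (simp add: sweep_flags_bits)
qed (use assms in \<open>auto simp: dec_state_def\<close>)

lemma valid_dec_state: "Q > 0 \<Longrightarrow> valid_state Q (dec_state Q n)"
  by (auto simp: dec_state_def Let_def)

lemma enc_state_less:
  assumes "valid_state Q s"
  shows "enc_state Q s < 7 + 2 * Q + Q * Q * 16"
proof (cases s)
  case (SweepR q dn q' ca co mo)
  have Q: "q < Q" "q' < Q" using assms SweepR by auto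
  have "Q * sweep_flags dn ca co mo \<le> Q * 15"
    using sweep_flags_less[of dn ca co mo] by simp
  then have "q' + Q * sweep_flags dn ca co mo + 1 \<le> Q * 16"
    using Q by linarith
  then have "Q * (q' + Q * sweep_flags dn ca co mo + 1) \<le> Q * (Q * 16)"
    by (rule mult_le_mono2)
  then show ?thesis
    using SweepR Q by (simp add: algebra_simps)
qed (use assms in auto)

definition sim_nstates :: "tm \<Rightarrow> nat" where "sim_nstates M = 7 + 2 * nstates M + nstates M * nstates M * 16"
definition sim_nsyms :: "tm \<Rightarrow> nat" where "sim_nsyms M = 3 * nsyms M * 64"

definition sim_tm :: "tm \<Rightarrow> tm" where
  "sim_tm M = \<lparr>nstates = sim_nstates M, nsyms = sim_nsyms M,
     delta = (\<lambda>qn an. case sim_delta M (dec_state (nstates M) qn) (dec_cell (nsyms M) an) of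
        (\<sigma>, c, d) \<Rightarrow> (enc_state (nstates M) \<sigma>, enc_cell (nsyms M) c, d))\<rparr>"

definition valid_config :: "tm \<Rightarrow> sim_config \<Rightarrow> bool" where
  "valid_config M cf = (case cf of (\<sigma>, T, h) \<Rightarrow> valid_state (nstates M) \<sigma>
    \<and> (\<forall>i. valid_cell (nsyms M) (T i)))"

definition enc_config :: "tm \<Rightarrow> sim_config \<Rightarrow> config" where
  "enc_config M cf = (case cf of (\<sigma>, T, h) \<Rightarrow> (enc_state (nstates M) \<sigma>, enc_cell (nsyms M) \<circ> T, h))"

lemma wf_tm_delta: "wf_tm M \<Longrightarrow> q < nstates M \<Longrightarrow> a < nsyms M \<Longrightarrow>
   fst (delta M q a) < nstates M \<and> fst (snd (delta M q a)) < nsyms M"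
  by (simp add: wf_tm_def)

lemma sim_delta_valid:
  assumes M: "wf_tm M" and s: "valid_state (nstates M) \<sigma>" and c: "valid_cell (nsyms M) c"
  shows "valid_state (nstates M) (fst (sim_delta M \<sigma> c))
      \<and> valid_cell (nsyms M) (fst (snd (sim_delta M \<sigma> c)))"
proof -
  have Q3: "3 \<le> nstates M" and S3: "3 \<le> nsyms M" using M by (auto simp: wf_tm_def)
  show ?thesis
  proof (cases \<sigma>)
    case (Reload e)
    then show ?thesis using s c S3 Q3 by (auto simp: reload_cell_def Let_def valid_cell_def)
  next
    case (SweepL q ca)
    then show ?thesis using s c Q3 by (auto simp: sweepL_cell_def Let_def valid_cell_def)
  next
    case (SweepR q dn q' ca co mo)
    have qv: "q < nstates M" "q' < nstates M" using s SweepR by auto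
    have d: "fst (delta M q (cell_sym c)) < nstates M \<and> fst (snd (delta M q (cell_sym c))) < nsyms M"
      using wf_tm_delta[OF M qv(1)] c by (auto simp: valid_cell_def)
    show ?thesis using SweepR s c d Q3 by (auto simp: sweepR_cell_def Let_def valid_cell_def)
  qed (use s c Q3 in \<open>auto simp: valid_cell_def blank_cell_def\<close>)
qed

lemma sim_step_valid: "wf_tm M \<Longrightarrow> valid_config M cf \<Longrightarrow> valid_config M (sim_step M cf)"
proof -
  assume M: "wf_tm M" and v: "valid_config M cf"
  obtain \<sigma> T h where cf: "cf = (\<sigma>, T, h)" by (cases cf) auto
  obtain \<sigma>' c' d where tr: "sim_delta M \<sigma> (T h) = (\<sigma>', c', d)" by (cases "sim_delta M \<sigma> (T h)") auto
  have "valid_state (nstates M) \<sigma>'" "valid_cell (nsyms M) c'"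
    using sim_delta_valid[OF M, of \<sigma> "T h"] v tr cf by (auto simp: valid_config_def)
  thus ?thesis using v cf tr by (auto simp: valid_config_def sim_step_def)
qed

lemma enc_state_halting:
  "valid_state Q \<sigma> \<Longrightarrow> (enc_state Q \<sigma> = 1 \<or> enc_state Q \<sigma> = 2) \<longleftrightarrow> (\<sigma> = Accept \<or> \<sigma> = Reject)"
  by (cases \<sigma>) auto

lemma step_sim_tm:
  assumes M: "wf_tm M" and v: "valid_config M cf"
  shows "step (sim_tm M) (enc_config M cf) = enc_config M (sim_step M cf)"
proof -
  obtain \<sigma> T h where cf: "cf = (\<sigma>, T, h)" by (cases cf) auto
  have vs: "valid_state (nstates M) \<sigma>" and vc: "\<And>i. valid_cell (nsyms M) (T i)"
      using v cf by (auto simp: valid_config_def)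
  show ?thesis
  proof (cases "\<sigma> = Accept \<or> \<sigma> = Reject")
    case True
    then show ?thesis using cf by (auto simp: step_def sim_step_def enc_config_def)
  next
    case False
    obtain \<sigma>' c' d where tr: "sim_delta M \<sigma> (T h) = (\<sigma>', c', d)" by (cases "sim_delta M \<sigma> (T h)") auto
    have nh: "\<not> (enc_state (nstates M) \<sigma> = 1 \<or> enc_state (nstates M) \<sigma> = 2)"
        using enc_state_halting[OF vs] False by simp
    have dl: "delta (sim_tm M) (enc_state (nstates M) \<sigma>) (enc_cell (nsyms M) (T h)) =
              (enc_state (nstates M) \<sigma>', enc_cell (nsyms M) c', d)"
      using tr by (simp add: sim_tm_def dec_enc_state[OF vs] dec_enc_cell[OF vc])
    have "(enc_cell (nsyms M) \<circ> T)(h := enc_cell (nsyms M) c') = enc_cell (nsyms M) \<circ> T(h := c')"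
      by (auto simp: fun_eq_iff)
    then show ?thesis using cf False nh dl tr by (simp add: step_def sim_step_def enc_config_def)
  qed
qed

lemma funpow_step_sim_tm:
  assumes M: "wf_tm M" and v: "valid_config M cf"
  shows "(step (sim_tm M) ^^ n) (enc_config M cf) = enc_config M ((sim_step M ^^ n) cf)
         \<and> valid_config M ((sim_step M ^^ n) cf)"
proof (induction n)
  case 0 then show ?case using v by simp
next
  case (Suc n)
  then show ?case using step_sim_tm[OF M] sim_step_valid[OF M] by simp
qed

definition init_tape :: "bool list \<Rightarrow> int \<Rightarrow> cell" where
  "init_tape w i = (if 0 \<le> i \<and> i < int (length w) then blank_cell\<lparr>cell_input := (if w ! nat i
    then 2 else 1)\<rparr> else blank_cell)"

lemma init_config_enc: "init_config w = enc_config M (Start, init_tape w, 0)"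
  by (auto simp: init_config_def enc_config_def init_tape_def fun_eq_iff enc_cell_def blank_cell_def cell_flags_def)

lemma valid_init_config: "wf_tm M \<Longrightarrow> valid_config M (Start, init_tape w, 0)"
  by (auto simp: valid_config_def init_tape_def valid_cell_def blank_cell_def wf_tm_def)

lemma wf_sim_tm: assumes M: "wf_tm M" shows "wf_tm (sim_tm M)"
proof -
  have Q3: "3 \<le> nstates M" and S3: "3 \<le> nsyms M" using M by (auto simp: wf_tm_def)
  have Qp: "0 < nstates M" and Sp: "0 < nsyms M" using Q3 S3 by auto
  { fix qn an
    obtain \<sigma>' c' d where tr: "sim_delta M (dec_state (nstates M) qn) (dec_cell (nsyms M) an) = (\<sigma>', c', d)"
      by (cases "sim_delta M (dec_state (nstates M) qn) (dec_cell (nsyms M) an)") auto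
    have "valid_state (nstates M) \<sigma>'" "valid_cell (nsyms M) c'"
      using sim_delta_valid[OF M valid_dec_state[OF Qp, of qn] valid_dec_cell[OF Sp, of an]]
          unfolding tr by auto
    hence "fst (delta (sim_tm M) qn an) < sim_nstates M
        \<and> fst (snd (delta (sim_tm M) qn an)) < sim_nsyms M"
      using tr enc_state_less enc_cell_less by (simp add: sim_tm_def sim_nstates_def sim_nsyms_def)
  }
  thus ?thesis using Q3 S3 by (auto simp: wf_tm_def sim_tm_def sim_nstates_def sim_nsyms_def)
qed

lemma run_sim_tm: assumes "wf_tm M"
  shows "run (sim_tm M) w n = enc_config M ((sim_step M ^^ n) (Start, init_tape w, 0))"
  unfolding run_def init_config_enc[of w M]
      using funpow_step_sim_tm[OF assms valid_init_config[OF assms]] by blast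

lemma sim_step_active: "\<sigma> \<noteq> Accept \<Longrightarrow> \<sigma> \<noteq> Reject \<Longrightarrow> sim_step M (\<sigma>, T, h) =
   (fst (sim_delta M \<sigma> (T h)), T(h := fst (snd (sim_delta M \<sigma> (T h)))),
       h + move (snd (snd (sim_delta M \<sigma> (T h)))))"
  by (simp add: sim_step_def split: prod.split)

lemma sim_step_halted: "\<sigma> = Accept \<or> \<sigma> = Reject \<Longrightarrow> sim_step M (\<sigma>, T, h) = (\<sigma>, T, h)"
  by (auto simp: sim_step_def)

lemma funpow_sim_step_halted: "\<sigma> = Accept \<or> \<sigma> = Reject \<Longrightarrow> (sim_step M ^^ n) (\<sigma>, T, h) = (\<sigma>, T, h)"
  by (induction n) (auto simp: sim_step_halted)

lemma sweepR_run:
  assumes "\<And>p. h \<le> p \<Longrightarrow> p < h + int n \<Longrightarrow> fst (sim_delta M (D p) (Told p)) = D (p+1)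
       \<and> snd (snd (sim_delta M (D p) (Told p))) = Rgt \<and> D p \<noteq> Accept \<and> D p \<noteq> Reject"
  shows "(sim_step M ^^ n) (D h, Told, h) = (D (h + int n),
     (\<lambda>i. if h \<le> i \<and> i < h + int n then fst (snd (sim_delta M (D i) (Told i))) else Told i), h + int n)"
  using assms
proof (induction n arbitrary: h Told)
  case 0
  then show ?case by (auto simp: fun_eq_iff)
next
  case (Suc n)
  have a: "fst (sim_delta M (D h) (Told h)) = D (h+1)" "snd (snd (sim_delta M (D h) (Told h))) = Rgt"
     "D h \<noteq> Accept" "D h \<noteq> Reject" using Suc.prems[of h] by auto
  let ?T' = "Told(h := fst (snd (sim_delta M (D h) (Told h))))"
  have st: "sim_step M (D h, Told, h) = (D (h+1), ?T', h + 1)"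
    using a by (simp add: sim_step_active move_def)
  have IH: "(sim_step M ^^ n) (D (h+1), ?T', h+1) = (D (h + 1 + int n),
     (\<lambda>i. if h + 1 \<le> i \<and> i < h + 1 + int n
         then fst (snd (sim_delta M (D i) (?T' i))) else ?T' i), h + 1 + int n)"
    by (rule Suc.IH) (use Suc.prems in auto)
  show ?case unfolding funpow_Suc_right o_apply st IH
    by (auto simp: fun_eq_iff algebra_simps)
qed

lemma sweepL_run:
  assumes "\<And>p. h - int n < p \<Longrightarrow> p \<le> h \<Longrightarrow> fst (sim_delta M (D p) (Told p)) = D (p-1)
       \<and> snd (snd (sim_delta M (D p) (Told p))) = Lft \<and> D p \<noteq> Accept \<and> D p \<noteq> Reject"
  shows "(sim_step M ^^ n) (D h, Told, h) = (D (h - int n),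
     (\<lambda>i. if h - int n < i \<and> i \<le> h then fst (snd (sim_delta M (D i) (Told i))) else Told i), h - int n)"
  using assms
proof (induction n arbitrary: h Told)
  case 0
  then show ?case by (auto simp: fun_eq_iff)
next
  case (Suc n)
  have a: "fst (sim_delta M (D h) (Told h)) = D (h-1)" "snd (snd (sim_delta M (D h) (Told h))) = Lft"
     "D h \<noteq> Accept" "D h \<noteq> Reject" using Suc.prems[of h] by auto
  let ?T' = "Told(h := fst (snd (sim_delta M (D h) (Told h))))"
  have st: "sim_step M (D h, Told, h) = (D (h-1), ?T', h - 1)"
    using a by (simp add: sim_step_active move_def)
  have IH: "(sim_step M ^^ n) (D (h-1), ?T', h-1) = (D (h - 1 - int n),
     (\<lambda>i. if h - 1 - int n < i \<and> i \<le> h - 1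
         then fst (snd (sim_delta M (D i) (?T' i))) else ?T' i), h - 1 - int n)"
    by (rule Suc.IH) (use Suc.prems in auto)
  show ?case unfolding funpow_Suc_right o_apply st IH
    by (auto simp: fun_eq_iff algebra_simps)
qed
lemma sweepR_cell_state: "fst (sweepR_cell M q dn q' ca co mo c) =
  SweepR q (dn \<or> cell_head c) (if \<not> dn \<and> cell_head c then fst (delta M q (cell_sym c)) else q')
     (\<not> dn \<and> cell_head c \<and> snd (snd (delta M q (cell_sym c))) = Rgt)
     (co \<or> (cell_input c \<noteq> 0 \<and> \<not> cell_spent c)) (mo \<or> (cell_input c \<noteq> 0 \<and> \<not> cell_spent c \<and> co))"
  by (auto simp: sweepR_cell_def Let_def)

lemma sweepR_cell_cell:
  assumes "delta M q (cell_sym c) = (qq, b, d)"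
  shows "cell_input (snd (sweepR_cell M q dn q' ca co mo c)) = cell_input c"
    "cell_sym (snd (sweepR_cell M q dn q' ca co mo c)) = (if \<not> dn \<and> cell_head c then b else cell_sym c)"
    "cell_head (snd (sweepR_cell M q dn q' ca co mo c)) = (if \<not> dn \<and> cell_head c
      then d \<noteq> Rgt else cell_head c \<or> ca)"
    "cell_left (snd (sweepR_cell M q dn q' ca co mo c)) = (if \<not> dn \<and> cell_head c \<and> d = Lft
      then True else cell_left c)"
    "cell_spent (snd (sweepR_cell M q dn q' ca co mo c)) = (cell_spent c \<or> (cell_input c \<noteq> 0 \<and> \<not> co))"
    "cell_origin (snd (sweepR_cell M q dn q' ca co mo c)) = cell_origin c"
    "cell_in_prefix (snd (sweepR_cell M q dn q' ca co mo c)) = cell_in_prefix c"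
    "cell_touched (snd (sweepR_cell M q dn q' ca co mo c)) = True"
  using assms by (auto simp: sweepR_cell_def Let_def)

lemma sweepL_cell_state: "fst (sweepL_cell q ca c) = SweepL q (cell_left c)"
  by (auto simp: sweepL_cell_def Let_def)

lemma sweepL_cell_cell:
    "cell_input (snd (sweepL_cell q ca c)) = cell_input c"
    "cell_sym (snd (sweepL_cell q ca c)) = cell_sym c"
    "cell_head (snd (sweepL_cell q ca c)) = (if cell_left c then False else cell_head c \<or> ca)"
    "cell_left (snd (sweepL_cell q ca c)) = False"
    "cell_spent (snd (sweepL_cell q ca c)) = cell_spent c"
    "cell_origin (snd (sweepL_cell q ca c)) = cell_origin c"
    "cell_in_prefix (snd (sweepL_cell q ca c)) = cell_in_prefix c"
    "cell_touched (snd (sweepL_cell q ca c)) = True"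
  by (auto simp: sweepL_cell_def Let_def)

lemma reload_cell_state: "fst (reload_cell e c) = Reload (if (if cell_origin c \<and> e = 0
  then 1 else e) = 1 \<and> \<not> cell_in_prefix c then 2
     else (if cell_origin c \<and> e = 0 then 1 else e))"
  by (auto simp: reload_cell_def Let_def)

lemma reload_cell_cell:
    "cell_input (snd (reload_cell e c)) = cell_input c"
    "cell_in_prefix (snd (reload_cell e c)) = (cell_in_prefix c \<or> ((if cell_origin c \<and> e = 0
      then 1 else e) = 1 \<and> \<not> cell_in_prefix c))"
    "cell_sym (snd (reload_cell e c)) = (if cell_in_prefix c \<or> ((if cell_origin c \<and> e = 0
      then 1 else e) = 1 \<and> \<not> cell_in_prefix c) then cell_input c else 0)"
    "cell_head (snd (reload_cell e c)) = cell_origin c"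
    "cell_left (snd (reload_cell e c)) = False"
    "cell_spent (snd (reload_cell e c)) = cell_spent c"
    "cell_origin (snd (reload_cell e c)) = cell_origin c"
    "cell_touched (snd (reload_cell e c)) = cell_touched c"
  by (auto simp: reload_cell_def Let_def)

lemma blank_cell_fields: "cell_input blank_cell = 0" "cell_sym blank_cell = 0" "cell_head blank_cell = False" "cell_left blank_cell = False" "cell_spent blank_cell = False"
  "cell_origin blank_cell = False" "cell_in_prefix blank_cell = False" "cell_touched blank_cell = False"
    by (simp_all add: blank_cell_def)

lemma touched_not_blank: "cell_touched c \<Longrightarrow> c \<noteq> blank_cell" by (auto simp: blank_cell_def)
lemma input_not_blank: "cell_input c \<noteq> 0 \<Longrightarrow> c \<noteq> blank_cell" by (auto simp: blank_cell_def)

lemma funpow_1_add: "(f ^^ (1 + a)) x = f ((f ^^ a) x)"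
  by (simp only: funpow_add o_apply) simp

lemma funpow_1_add_twice: "(f ^^ (1 + b + 1 + a)) x = f ((f ^^ b) (f ((f ^^ a) x)))"
  by (simp only: funpow_add o_apply) simp

lemma funpow_1_add_four_times:
  "(f ^^ (1 + a + 1 + b + 1 + c + 1 + n)) x = f ((f ^^ a) (f ((f ^^ b) (f ((f ^^ c) (f ((f ^^ n) x)))))))"
  by (simp only: funpow_add o_apply) simp

section \<open>Running the simulator\<close>

locale delayed_sim =
  fixes M :: tm and l :: learning_fun and w :: "bool list"
  assumes computes: "tm_computes M l"
begin

abbreviation prefix_time :: "nat \<Rightarrow> nat" where "prefix_time k \<equiv> halt_time M (take k w)"

definition time_before :: "nat \<Rightarrow> nat" where "time_before k = (\<Sum>i<k. prefix_time i)"

abbreviation prefix_run :: "nat \<Rightarrow> nat \<Rightarrow> config" where "prefix_run k j \<equiv> run M (take k w) j"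

abbreviation answer :: bool where "answer \<equiv> delayed_lf M l w"

lemma delayed_lf_iff: "answer \<longleftrightarrow> (\<exists>k. time_before (Suc k) = length w \<and> l (take k w))"
  by (simp add: delayed_lf_def time_before_def)

definition input_code :: "int \<Rightarrow> nat" where
  "input_code i = (if 0 \<le> i \<and> i < int (length w) then (if w ! nat i then 2 else 1) else 0)"

text \<open>\<open>sim_inv k j L R T\<close>: the simulator stands at the start of simulated step \<open>j\<close> of the run on
  \<open>take k w\<close>, the used region of its tape is \<open>[L, R)\<close>, and the cells there mirror that run's
  configuration, with \<open>time_before k + j\<close> input cells spent.\<close>
definition sim_inv :: "nat \<Rightarrow> nat \<Rightarrow> int \<Rightarrow> int \<Rightarrow> (int \<Rightarrow> cell) \<Rightarrow> bool" where
  "sim_inv k j L R T \<longleftrightarrow> (\<exists>q tp hh. prefix_run k j = (q, tp, hh) \<and>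
     j < prefix_time k \<and> time_before k + j < length w \<and> L \<le> 0 \<and> int (length w) \<le> R \<and>
     R - L \<le> int (length w) + int (time_before k + j) \<and> L \<le> hh \<and> hh < R \<and>
     (\<forall>i. (i < L \<or> R \<le> i) \<longrightarrow> T i = blank_cell \<and> tp i = 0) \<and>
     (\<forall>i. L \<le> i \<and> i < R \<longrightarrow>
        cell_input (T i) = input_code i \<and> cell_sym (T i) = tp i \<and> (cell_head (T i) \<longleftrightarrow> i = hh) \<and>
        \<not> cell_left (T i) \<and> (cell_spent (T i) \<longleftrightarrow> 0 \<le> i \<and> i < int (time_before k + j)) \<and>
        (cell_origin (T i) \<longleftrightarrow> i = 0) \<and> (cell_in_prefix (T i) \<longleftrightarrow> 0 \<le> i \<and> i < int k) \<and>
        (cell_input (T i) \<noteq> 0 \<or> cell_touched (T i))))"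

lemma prefix_time_pos: "prefix_time k \<ge> 1" using halt_time_pos[OF computes] .

lemma time_before_ge: "time_before k \<ge> k"
proof -
  have "(\<Sum>i<k. (1::nat)) \<le> (\<Sum>i<k. prefix_time i)" by (intro sum_mono) (use prefix_time_pos in auto)
  thus ?thesis by (simp add: time_before_def)
qed

lemma time_before_Suc: "time_before (Suc k) = time_before k + prefix_time k"
  by (simp add: time_before_def)

lemma input_code_nonzero: "input_code i \<noteq> 0 \<longleftrightarrow> 0 \<le> i \<and> i < int (length w)"
  by (simp add: input_code_def)

lemma prefix_run_active: "j < prefix_time k \<Longrightarrow> fst (prefix_run k j) \<noteq> 1 \<and> fst (prefix_run k j) \<noteq> 2"
  using halted_iff_halt_time_le[OF computes, of "take k w" j] by auto

lemma prefix_run_Suc: "j < prefix_time k \<Longrightarrow> prefix_run k j = (q, tp, hh) \<Longrightarrow>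
    delta M q (tp hh) = (qq, b, d) \<Longrightarrow> prefix_run k (Suc j) = (qq, tp(hh := b), hh + move d)"
  using prefix_run_active[of j k] by (simp add: run_Suc step_def)

lemma sim_invD:
  assumes "sim_inv k j L R T" "prefix_run k j = (q, tp, hh)"
  shows "j < prefix_time k" "time_before k + j < length w" "L \<le> 0" "int (length w) \<le> R"
     "R - L \<le> int (length w) + int (time_before k + j)" "L \<le> hh" "hh < R"
     "\<And>i. (i < L \<or> R \<le> i) \<Longrightarrow> T i = blank_cell \<and> tp i = 0"
     "\<And>i. L \<le> i \<Longrightarrow> i < R \<Longrightarrow>
        cell_input (T i) = input_code i \<and> cell_sym (T i) = tp i \<and> (cell_head (T i) \<longleftrightarrow> i = hh) \<and>
        \<not> cell_left (T i) \<and> (cell_spent (T i) \<longleftrightarrow> 0 \<le> i \<and> i < int (time_before k + j)) \<and>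
        (cell_origin (T i) \<longleftrightarrow> i = 0) \<and> (cell_in_prefix (T i) \<longleftrightarrow> 0 \<le> i \<and> i < int k) \<and>
        (cell_input (T i) \<noteq> 0 \<or> cell_touched (T i))"
  using assms unfolding sim_inv_def by auto

definition sweepR_state :: "nat \<Rightarrow> int \<Rightarrow> nat \<Rightarrow> dir \<Rightarrow> nat \<Rightarrow> int \<Rightarrow> sim_state" where
  "sweepR_state q hh qq d s p =
     SweepR q (hh < p) (if hh < p then qq else 0) (d = Rgt \<and> p = hh + 1) (int s < p)
       (int s + 1 < p \<and> s + 1 < length w)"

lemma sweepR_phase:
  assumes I: "sim_inv k j L R T" and mr: "prefix_run k j = (q, tp, hh)"
      and dl: "delta M q (tp hh) = (qq, b, d)"
    and E: "E = R + (if d = Rgt \<and> hh + 1 = R then 1 else 0)"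
  shows "(sim_step M ^^ nat (E - L)) (step_start q, T, L) =
     (sweepR_state q hh qq d (time_before k + j) E,
      \<lambda>i. if L \<le> i \<and> i < E then fst (snd (sim_delta M (sweepR_state q hh qq d (time_before k + j) i) (T i))) else T i, E)"
proof -
  let ?s = "time_before k + j"
  let ?D = "sweepR_state q hh qq d ?s"
  note ID = sim_invD[OF I mr]
  have EL: "L + int (nat (E - L)) = E" using ID E by auto
  have DL: "?D L = step_start q" using ID by (auto simp: sweepR_state_def)
  have ob: "fst (sim_delta M (?D p) (T p)) = ?D (p+1) \<and> snd (snd (sim_delta M (?D p) (T p))) = Rgt
       \<and> ?D p \<noteq> Accept \<and> ?D p \<noteq> Reject" if p: "L \<le> p" "p < L + int (nat (E - L))" for p
  proof -
    have pE: "p < E" using p EL by simp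
    have f: "(cell_head (T p) \<longleftrightarrow> p = hh) \<and> (p = hh \<longrightarrow> cell_sym (T p) = tp hh) \<and>
        (cell_input (T p) \<noteq> 0 \<longleftrightarrow> 0 \<le> p \<and> p < int (length w)) \<and> (cell_spent (T p) \<longleftrightarrow> 0 \<le> p \<and> p < int ?s)
        \<and> \<not> (T p = blank_cell \<and> \<not> (d = Rgt \<and> p = hh + 1))"
    proof (cases "p < R")
      case True
      then show ?thesis using ID(9)[of p] p input_code_nonzero[of p] touched_not_blank input_not_blank by auto
    next
      case False
      hence pR: "p = R" "d = Rgt" "hh + 1 = R" using pE E by (auto split: if_splits)
      have "T p = blank_cell" using ID(8)[of p] False by auto
      thus ?thesis using pR ID by (auto simp: blank_cell_fields)
    qed
    have nz: "\<not> (T p = blank_cell \<and> \<not> (d = Rgt \<and> p = hh + 1))" using f by blast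
    have cell_sym: "p = hh \<Longrightarrow> delta M q (cell_sym (T p)) = (qq, b, d)" using f dl by auto
    have tr: "sim_delta M (?D p) (T p) = (fst (sweepR_cell M q (hh < p) (if hh < p
        then qq else 0) (d = Rgt \<and> p = hh + 1) (int ?s < p)
      (int ?s + 1 < p \<and> ?s + 1 < length w) (T p)),
          snd (sweepR_cell M q (hh < p) (if hh < p then qq else 0) (d = Rgt \<and> p = hh + 1) (int ?s < p)
      (int ?s + 1 < p \<and> ?s + 1 < length w) (T p)), Rgt)"
      unfolding sweepR_state_def using nz by (simp only: sim_delta.simps if_False)
    have h1: "cell_head (T p) = (p = hh)" using f by blast
    have h2: "(cell_input (T p) \<noteq> 0) = (0 \<le> p \<and> p < int (length w))" using f by blast
    have h3: "cell_spent (T p) = (0 \<le> p \<and> p < int ?s)" using f by blast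
    have sm: "int ?s < int (length w)" using ID(2) by simp
    have c1: "(hh < p \<or> cell_head (T p)) = (hh < p + 1)" unfolding h1 by arith
    have c2: "(if \<not> hh < p \<and> cell_head (T p)
        then fst (delta M q (cell_sym (T p))) else (if hh < p then qq else 0))
         = (if hh < p + 1 then qq else 0)"
    proof (cases "p = hh")
      case True thus ?thesis using cell_sym h1 by simp
    next
      case False thus ?thesis using h1 by auto
    qed
    have c3: "(\<not> hh < p \<and> cell_head (T p) \<and> snd (snd (delta M q (cell_sym (T p)))) = Rgt) = (d = Rgt
        \<and> p + 1 = hh + 1)"
    proof (cases "p = hh")
      case True thus ?thesis using cell_sym h1 by simp
    next
      case False thus ?thesis using h1 by auto
    qed
    have c4: "(int ?s < p \<or> (cell_input (T p) \<noteq> 0 \<and> \<not> cell_spent (T p))) = (int ?s < p + 1)"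
      unfolding h2 h3 using sm by arith
    have c5: "((int ?s + 1 < p \<and> ?s + 1 < length w) \<or> (cell_input (T p) \<noteq> 0
        \<and> \<not> cell_spent (T p) \<and> int ?s < p))
        = (int ?s + 1 < p + 1 \<and> ?s + 1 < length w)"
      unfolding h2 h3 using sm by arith
    show ?thesis unfolding tr fst_conv snd_conv sweepR_cell_state c1 c2 c3 c4 c5
      by (simp add: sweepR_state_def)
  qed
  show ?thesis
    using sweepR_run[of L "nat (E - L)" M ?D T, OF ob] DL EL by simp
qed

lemma sweepR_phase_tape:
  assumes I: "sim_inv k j L R T" and mr: "prefix_run k j = (q, tp, hh)"
      and dl: "delta M q (tp hh) = (qq, b, d)"
    and E: "E = R + (if d = Rgt \<and> hh + 1 = R then 1 else 0)"
    and T1: "T1 = (\<lambda>i. if L \<le> i \<and> i < E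
        then fst (snd (sim_delta M (sweepR_state q hh qq d (time_before k + j) i) (T i))) else T i)"
  shows "\<And>i. (i < L \<or> E \<le> i) \<Longrightarrow> T1 i = blank_cell"
    and "\<And>i. L \<le> i \<Longrightarrow> i < E \<Longrightarrow> cell_input (T1 i) = input_code i \<and> cell_sym (T1 i) = (tp(hh := b)) i
        \<and> (cell_head (T1 i) \<longleftrightarrow> (i = hh \<and> d \<noteq> Rgt) \<or> (i = hh + 1 \<and> d = Rgt))
        \<and> (cell_left (T1 i) \<longleftrightarrow> i = hh \<and> d = Lft) \<and> (cell_spent (T1 i) \<longleftrightarrow> 0 \<le> i
            \<and> i < int (time_before k + j) + 1)
        \<and> (cell_origin (T1 i) \<longleftrightarrow> i = 0) \<and> (cell_in_prefix (T1 i) \<longleftrightarrow> 0 \<le> i \<and> i < int k)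
            \<and> cell_touched (T1 i)"
proof -
  let ?s = "time_before k + j"
  note ID = sim_invD[OF I mr]
  show "\<And>i. (i < L \<or> E \<le> i) \<Longrightarrow> T1 i = blank_cell"
    using ID(8) E unfolding T1 by (auto split: if_splits)
  fix i assume i: "L \<le> i" "i < E"
  have f: "(cell_head (T i) \<longleftrightarrow> i = hh) \<and> cell_sym (T i) = tp i \<and> cell_input (T i) = input_code i \<and>
        (cell_spent (T i) \<longleftrightarrow> 0 \<le> i \<and> i < int ?s) \<and> \<not> cell_left (T i) \<and> (cell_origin (T i) \<longleftrightarrow> i = 0)
        \<and> (cell_in_prefix (T i) \<longleftrightarrow> 0 \<le> i \<and> i < int k)
        \<and> \<not> (T i = blank_cell \<and> \<not> (d = Rgt \<and> i = hh + 1))"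
  proof (cases "i < R")
    case True
    then show ?thesis using ID(9)[of i] i touched_not_blank input_not_blank by auto
  next
    case False
    hence pR: "i = R" "d = Rgt" "hh + 1 = R" using i E by (auto split: if_splits)
    have "T i = blank_cell" "tp i = 0" using ID(8)[of i] False by auto
    moreover have "int k \<le> R" using time_before_ge[of k] ID(2,4) by linarith
    ultimately show ?thesis using pR ID by (auto simp: blank_cell_fields input_code_def)
  qed
  have h1: "cell_head (T i) = (i = hh)" and h2: "cell_sym (T i) = tp i"
      and h3: "cell_input (T i) = input_code i"
    and h4: "cell_spent (T i) = (0 \<le> i \<and> i < int ?s)" and h5: "\<not> cell_left (T i)"
        and h6: "cell_origin (T i) = (i = 0)"
    and h7: "cell_in_prefix (T i) = (0 \<le> i \<and> i < int k)" and nz: "\<not> (T i = blank_cell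
        \<and> \<not> (d = Rgt \<and> i = hh + 1))"
    using f by blast+
  have sm: "int ?s < int (length w)" using ID(2) by simp
  have T1i: "T1 i = snd (sweepR_cell M q (hh < i) (if hh < i
      then qq else 0) (d = Rgt \<and> i = hh + 1) (int ?s < i)
      (int ?s + 1 < i \<and> ?s + 1 < length w) (T i))"
    unfolding T1 sweepR_state_def using i nz by (simp only: sim_delta.simps if_False if_True) simp
  have dl': "delta M q (cell_sym (T i)) = (if i = hh then (qq, b, d) else delta M q (tp i))"
    using dl h2 by simp
  obtain qx bx dx where dx: "delta M q (cell_sym (T i)) = (qx, bx, dx)"
      by (cases "delta M q (cell_sym (T i))") auto
  have dxe: "i = hh \<Longrightarrow> qx = qq \<and> bx = b \<and> dx = d" using dx dl' by simp
  note rsn = sweepR_cell_cell[OF dx, of "hh < i" "if hh < i then qq else 0" "d = Rgt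
      \<and> i = hh + 1" "int ?s < i"
      "int ?s + 1 < i \<and> ?s + 1 < length w"]
  have inpnz: "(input_code i \<noteq> 0) = (0 \<le> i \<and> i < int (length w))" by (rule input_code_nonzero)
  show "cell_input (T1 i) = input_code i \<and> cell_sym (T1 i) = (tp(hh := b)) i
        \<and> (cell_head (T1 i) \<longleftrightarrow> (i = hh \<and> d \<noteq> Rgt) \<or> (i = hh + 1 \<and> d = Rgt))
        \<and> (cell_left (T1 i) \<longleftrightarrow> i = hh \<and> d = Lft) \<and> (cell_spent (T1 i) \<longleftrightarrow> 0 \<le> i
            \<and> i < int (time_before k + j) + 1)
        \<and> (cell_origin (T1 i) \<longleftrightarrow> i = 0) \<and> (cell_in_prefix (T1 i) \<longleftrightarrow> 0 \<le> i \<and> i < int k)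
            \<and> cell_touched (T1 i)"
  proof (intro conjI)
    show "cell_input (T1 i) = input_code i" unfolding T1i rsn h3 ..
    show "cell_sym (T1 i) = (tp(hh := b)) i" unfolding T1i rsn h1 h2 using dxe by auto
    show "cell_head (T1 i) \<longleftrightarrow> (i = hh \<and> d \<noteq> Rgt) \<or> (i = hh + 1 \<and> d = Rgt)"
      unfolding T1i rsn h1 using dxe by auto
    show "cell_left (T1 i) \<longleftrightarrow> i = hh \<and> d = Lft" unfolding T1i rsn h1 using dxe h5 by auto
    show "cell_spent (T1 i) \<longleftrightarrow> 0 \<le> i \<and> i < int (time_before k + j) + 1"
      unfolding T1i rsn h4 h3 inpnz using sm by arith
    show "cell_origin (T1 i) \<longleftrightarrow> i = 0" unfolding T1i rsn h6 ..
    show "cell_in_prefix (T1 i) \<longleftrightarrow> 0 \<le> i \<and> i < int k" unfolding T1i rsn h7 ..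
    show "cell_touched (T1 i)" unfolding T1i rsn by simp
  qed
qed

lemma simulated_step_phase:
  assumes I: "sim_inv k j L R T" and mr: "prefix_run k j = (q, tp, hh)"
      and dl: "delta M q (tp hh) = (qq, b, d)"
    and E: "E = R + (if d = Rgt \<and> hh + 1 = R then 1 else 0)"
    and nh: "qq \<noteq> 1" "qq \<noteq> 2" and more: "time_before k + j + 1 < length w"
    and L': "L' = L - (if d = Lft \<and> hh = L then 1 else 0)"
  shows "\<exists>T2. (sim_step M ^^ (1 + nat (E - L') + 1 + nat (E - L))) (step_start q, T, L)
      = (step_start qq, T2, L') \<and> sim_inv k (Suc j) L' E T2"
proof -
  let ?s = "time_before k + j"
  define T1 where "T1 = (\<lambda>i. if L \<le> i \<and> i < E
      then fst (snd (sim_delta M (sweepR_state q hh qq d ?s i) (T i))) else T i)"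
  note ID = sim_invD[OF I mr]
  note st1 = sweepR_phase[OF I mr dl E, folded T1_def]
  note F1 = sweepR_phase_tape[OF I mr dl E T1_def]
  have EL: "E \<ge> R" "E \<le> R + 1" using E by auto
  have T1E: "T1 E = blank_cell" using F1(1)[of E] by simp
  have DE: "sweepR_state q hh qq d ?s E = SweepR q True qq False True True"
    using E ID more EL unfolding sweepR_state_def by auto
  have st2: "sim_step M (sweepR_state q hh qq d ?s E, T1, E) = (SweepL qq False, T1, E - 1)"
    unfolding DE using T1E nh by (simp add: sim_step_def move_def fun_upd_idem)
  define D2 where "D2 = (\<lambda>p. SweepL qq (d = Lft \<and> p = hh - 1))"
  define n2 where "n2 = nat (E - L')"
  have L'b: "L' \<le> L" "L' \<ge> L - 1" "L' \<le> hh" using L' ID by auto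
  have n2e: "E - 1 - int n2 = L' - 1" unfolding n2_def using L'b ID EL by auto
  have D2E: "D2 (E - 1) = SweepL qq False" unfolding D2_def using ID EL by auto
  have ob: "fst (sim_delta M (D2 p) (T1 p)) = D2 (p - 1) \<and> snd (snd (sim_delta M (D2 p) (T1 p))) = Lft
       \<and> D2 p \<noteq> Accept \<and> D2 p \<noteq> Reject" if p: "E - 1 - int n2 < p" "p \<le> E - 1" for p
  proof -
    have pl': "cell_left (T1 p) = (p = hh \<and> d = Lft)" and nz: "\<not> (T1 p = blank_cell
        \<and> \<not> (d = Lft \<and> p = hh - 1))"
    proof -
      have "cell_left (T1 p) = (p = hh \<and> d = Lft) \<and> \<not> (T1 p = blank_cell \<and> \<not> (d = Lft \<and> p = hh - 1))"
      proof (cases "L \<le> p")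
        case True
        then show ?thesis using F1(2)[of p] p touched_not_blank by auto
      next
        case False
        hence "p = L - 1" "d = Lft" "hh = L" using p n2e L' by (auto split: if_splits)
        moreover have "T1 p = blank_cell" using F1(1)[of p] False by auto
        ultimately show ?thesis by (auto simp: blank_cell_fields)
      qed
      thus "cell_left (T1 p) = (p = hh \<and> d = Lft)" "\<not> (T1 p = blank_cell \<and> \<not> (d = Lft
          \<and> p = hh - 1))" by blast+
    qed
    have "sim_delta M (D2 p) (T1 p) = (fst (sweepL_cell qq (d = Lft \<and> p = hh - 1) (T1 p)),
        snd (sweepL_cell qq (d = Lft \<and> p = hh - 1) (T1 p)), Lft)"
      unfolding D2_def using nz by (simp only: sim_delta.simps if_False)
    thus ?thesis unfolding D2_def sweepL_cell_state pl' by auto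
  qed
  define T2 where "T2 = (\<lambda>i. if L' \<le> i \<and> i < E then fst (snd (sim_delta M (D2 i) (T1 i))) else T1 i)"
  have T2eq: "(\<lambda>i. if E - 1 - int n2 < i \<and> i \<le> E - 1
      then fst (snd (sim_delta M (D2 i) (T1 i))) else T1 i) = T2"
    unfolding T2_def n2e
  proof (rule ext)
    fix i :: int
    have "(L' - 1 < i \<and> i \<le> E - 1) = (L' \<le> i \<and> i < E)" by arith
    thus "(if L' - 1 < i \<and> i \<le> E - 1 then fst (snd (sim_delta M (D2 i) (T1 i))) else T1 i) =
         (if L' \<le> i \<and> i < E then fst (snd (sim_delta M (D2 i) (T1 i))) else T1 i)" by simp
  qed
  have st3: "(sim_step M ^^ n2) (SweepL qq False, T1, E - 1) = (D2 (L' - 1), T2, L' - 1)"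
  proof -
    have "(sim_step M ^^ n2) (D2 (E - 1), T1, E - 1) = (D2 (E - 1 - int n2),
     (\<lambda>i. if E - 1 - int n2 < i \<and> i \<le> E - 1 then fst (snd (sim_delta M (D2 i) (T1 i))) else T1 i),
         E - 1 - int n2)"
      by (rule sweepL_run) (use ob in blast)
    thus ?thesis unfolding T2eq unfolding D2E n2e .
  qed
  have T2L: "T2 (L' - 1) = blank_cell" unfolding T2_def using F1(1)[of "L' - 1"] L'b by auto
  have D2L: "D2 (L' - 1) = SweepL qq False" unfolding D2_def L' by auto
  have st4: "sim_step M (D2 (L' - 1), T2, L' - 1) = (step_start qq, T2, L')"
    unfolding D2L using T2L by (simp add: sim_step_def move_def fun_upd_idem)
  have run: "(sim_step M ^^ (1 + nat (E - L') + 1 + nat (E - L))) (step_start q, T, L)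
      = (step_start qq, T2, L')"
    unfolding funpow_1_add_twice st1 st2 n2_def[symmetric] st3 st4 ..
  have mr2: "prefix_run k (Suc j) = (qq, tp(hh := b), hh + move d)"
      by (rule prefix_run_Suc[OF ID(1) mr dl])
  have j2: "Suc j < prefix_time k"
  proof -
    have "fst (prefix_run k (Suc j)) \<notin> {1,2}" using mr2 nh by simp
    thus ?thesis using halted_iff_halt_time_le[OF computes, of "take k w" "Suc j"] by simp
  qed
  have PF: "cell_left (T1 p) = (p = hh \<and> d = Lft) \<and> (p < L \<longrightarrow> T1 p = blank_cell \<and> p = L - 1)"
    if p: "L' \<le> p" "p < E" for p
  proof (cases "L \<le> p")
    case True
    then show ?thesis using F1(2)[of p] p by auto
  next
    case False
    hence "p = L - 1" "d = Lft" "hh = L" using p L' by (auto split: if_splits)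
    moreover have "T1 p = blank_cell" using F1(1)[of p] False by auto
    ultimately show ?thesis by (auto simp: blank_cell_fields)
  qed
  have T2i: "T2 i = snd (sweepL_cell qq (d = Lft \<and> i = hh - 1) (T1 i))" if i: "L' \<le> i" "i < E" for i
  proof -
    have nz: "\<not> (T1 i = blank_cell \<and> \<not> (d = Lft \<and> i = hh - 1))"
    proof (cases "L \<le> i")
      case True thus ?thesis using F1(2)[of i] i touched_not_blank by auto
    next
      case False thus ?thesis using PF[OF i] L' i by (auto split: if_splits)
    qed
    show ?thesis unfolding T2_def D2_def
        using i nz by (simp only: sim_delta.simps if_False if_True) simp
  qed
  have ins: "cell_input (T2 i) = input_code i \<and> cell_sym (T2 i) = (tp(hh := b)) i
      \<and> (cell_head (T2 i) \<longleftrightarrow> i = hh + move d)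
        \<and> \<not> cell_left (T2 i) \<and> (cell_spent (T2 i) \<longleftrightarrow> 0 \<le> i \<and> i < int (time_before k + Suc j))
            \<and> (cell_origin (T2 i) \<longleftrightarrow> i = 0)
        \<and> (cell_in_prefix (T2 i) \<longleftrightarrow> 0 \<le> i \<and> i < int k) \<and> (cell_input (T2 i) \<noteq> 0 \<or> cell_touched (T2 i))"
    if i: "L' \<le> i" "i < E" for i
  proof (cases "L \<le> i")
    case True
    have f: "cell_input (T1 i) = input_code i \<and> cell_sym (T1 i) = (tp(hh := b)) i
        \<and> (cell_head (T1 i) \<longleftrightarrow> (i = hh \<and> d \<noteq> Rgt) \<or> (i = hh + 1 \<and> d = Rgt))
        \<and> (cell_left (T1 i) \<longleftrightarrow> i = hh \<and> d = Lft) \<and> (cell_spent (T1 i) \<longleftrightarrow> 0 \<le> i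
            \<and> i < int (time_before k + j) + 1)
        \<and> (cell_origin (T1 i) \<longleftrightarrow> i = 0) \<and> (cell_in_prefix (T1 i) \<longleftrightarrow> 0 \<le> i \<and> i < int k)
            \<and> cell_touched (T1 i)"
      using F1(2)[of i] True i by blast
    show ?thesis unfolding T2i[OF i] sweepL_cell_cell using f
      by (cases d) (auto simp: move_def)
  next
    case False
    hence e: "i = L - 1" "d = Lft" "hh = L" "T1 i = blank_cell"
        using PF[OF i] i L' by (auto split: if_splits)
    have "tp i = 0" using ID(8)[of i] e by auto
    thus ?thesis unfolding T2i[OF i] sweepL_cell_cell
        using e ID(3) by (auto simp: blank_cell_fields move_def input_code_def)
  qed
  have outs: "T2 i = blank_cell \<and> (tp(hh := b)) i = 0" if i: "i < L' \<or> E \<le> i" for i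
  proof -
    have "T2 i = T1 i" unfolding T2_def using i by auto
    moreover have "T1 i = blank_cell" using F1(1)[of i] i L'b by auto
    moreover have "i \<noteq> hh" using i L'b ID(7) EL by auto
    moreover have "tp i = 0" using ID(8)[of i] i L'b EL by auto
    ultimately show ?thesis by simp
  qed
  have hb: "L' \<le> hh + move d" "hh + move d < E" using L' E ID(6,7) by (cases d; auto simp: move_def)+
  have bnd: "E - L' \<le> int (length w) + int (time_before k + Suc j)"
    using E L' ID(5) by (auto split: if_splits)
  have "sim_inv k (Suc j) L' E T2"
    unfolding sim_inv_def
    apply (rule exI[of _ qq], rule exI[of _ "tp(hh := b)"], rule exI[of _ "hh + move d"])
    using mr2 j2 more L'b ID(3,4) EL bnd hb outs ins by auto (metis ins neq0_conv)
  thus ?thesis using run by blast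
qed

lemma last_step_phase:
  assumes I: "sim_inv k j L R T" and mr: "prefix_run k j = (q, tp, hh)"
      and dl: "delta M q (tp hh) = (qq, b, d)"
    and E: "E = R + (if d = Rgt \<and> hh + 1 = R then 1 else 0)"
    and last: "time_before k + j + 1 = length w"
  shows "fst ((sim_step M ^^ (1 + nat (E - L))) (step_start q, T, L)) = (if qq = 1 then Accept else Reject)"
proof -
  let ?s = "time_before k + j"
  define T1 where "T1 = (\<lambda>i. if L \<le> i \<and> i < E
      then fst (snd (sim_delta M (sweepR_state q hh qq d ?s i) (T i))) else T i)"
  note ID = sim_invD[OF I mr]
  note st1 = sweepR_phase[OF I mr dl E, folded T1_def]
  note F1 = sweepR_phase_tape[OF I mr dl E T1_def]
  have EL: "E \<ge> R" "E \<le> R + 1" using E by auto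
  have T1E: "T1 E = blank_cell" using F1(1)[of E] by simp
  have DE: "sweepR_state q hh qq d ?s E = SweepR q True qq False True False"
    using E ID last EL unfolding sweepR_state_def by auto
  show ?thesis unfolding funpow_1_add st1 DE using T1E by (simp add: sim_step_def)
qed

lemma next_prefix_phase:
  assumes I: "sim_inv k j L R T" and mr: "prefix_run k j = (q, tp, hh)"
      and dl: "delta M q (tp hh) = (qq, b, d)"
    and E: "E = R + (if d = Rgt \<and> hh + 1 = R then 1 else 0)"
    and hlt: "qq = 1 \<or> qq = 2" and more: "time_before k + j + 1 < length w"
  shows "\<exists>T5. (sim_step M ^^ (1 + nat (E - L) + 1 + nat (E - L) + 1 + nat (E - L) + 1 + nat (E - L)))
      (step_start q, T, L)
      = (step_start 0, T5, L) \<and> sim_inv (Suc k) 0 L E T5"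
proof -
  let ?s = "time_before k + j"
  let ?n = "nat (E - L)"
  define T1 where "T1 = (\<lambda>i. if L \<le> i \<and> i < E
      then fst (snd (sim_delta M (sweepR_state q hh qq d ?s i) (T i))) else T i)"
  note ID = sim_invD[OF I mr]
  note st1 = sweepR_phase[OF I mr dl E, folded T1_def]
  note F1 = sweepR_phase_tape[OF I mr dl E T1_def]
  have EL: "E \<ge> R" "E \<le> R + 1" using E by auto
  have nE: "L + int ?n = E" "E - 1 - int ?n = L - 1" using EL ID by auto
  have T1E: "T1 E = blank_cell" using F1(1)[of E] by simp
  have T1L: "T1 (L - 1) = blank_cell" using F1(1)[of "L - 1"] by simp
  have kle: "int k < E" "k \<le> ?s" using time_before_ge[of k] ID(2,4) EL by auto
  have DE: "sweepR_state q hh qq d ?s E = SweepR q True qq False True True"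
    using E ID more EL unfolding sweepR_state_def by auto
  have st2: "sim_step M (sweepR_state q hh qq d ?s E, T1, E) = (Rewind, T1, E - 1)"
    unfolding DE using T1E hlt by (auto simp: sim_step_def move_def fun_upd_idem)
  have nzT1: "T1 p \<noteq> blank_cell" if "L \<le> p" "p < E" for p
      using F1(2)[OF that] touched_not_blank by blast
  have st3: "(sim_step M ^^ ?n) (Rewind, T1, E - 1) = (Rewind, T1, L - 1)"
  proof -
    have "(sim_step M ^^ ?n) ((\<lambda>_. Rewind) (E - 1), T1, E - 1) = ((\<lambda>_. Rewind) (E - 1 - int ?n),
     (\<lambda>i. if E - 1 - int ?n < i \<and> i \<le> E - 1
         then fst (snd (sim_delta M ((\<lambda>_. Rewind) i) (T1 i))) else T1 i), E - 1 - int ?n)"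
      by (rule sweepL_run) (use nzT1 nE in auto)
    moreover have "(\<lambda>i. if E - 1 - int ?n < i \<and> i \<le> E - 1
        then fst (snd (sim_delta M ((\<lambda>_. Rewind) i) (T1 i))) else T1 i) = T1"
      by (rule ext) (use nzT1 nE in auto)
    ultimately show ?thesis unfolding nE by simp
  qed
  have st4: "sim_step M (Rewind, T1, L - 1) = (Reload 0, T1, L)"
    using T1L by (simp add: sim_step_def move_def fun_upd_idem)
  define D4 where "D4 = (\<lambda>p::int. Reload (if p \<le> 0 then 0 else if p \<le> int k then 1 else 2))"
  define T4 where "T4 = (\<lambda>i. if L \<le> i \<and> i < E then snd (reload_cell (if i \<le> 0 then 0 else if i \<le> int k
      then 1 else 2) (T1 i)) else T1 i)"
  have ob4: "fst (sim_delta M (D4 p) (T1 p)) = D4 (p+1) \<and> snd (snd (sim_delta M (D4 p) (T1 p))) = Rgt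
       \<and> D4 p \<noteq> Accept \<and> D4 p \<noteq> Reject" if p: "L \<le> p" "p < L + int ?n" for p
  proof -
    have pp: "L \<le> p" "p < E" using p nE by auto
    have c: "(cell_origin (T1 p) \<longleftrightarrow> p = 0) \<and> (cell_in_prefix (T1 p) \<longleftrightarrow> 0 \<le> p \<and> p < int k)"
        using F1(2)[OF pp] by blast
    show ?thesis using nzT1[OF pp] c unfolding D4_def by (auto simp: reload_cell_state)
  qed
  have st5: "(sim_step M ^^ ?n) (Reload 0, T1, L) = (Reload 2, T4, E)"
  proof -
    have "(sim_step M ^^ ?n) (D4 L, T1, L) = (D4 (L + int ?n),
     (\<lambda>i. if L \<le> i \<and> i < L + int ?n then fst (snd (sim_delta M (D4 i) (T1 i))) else T1 i), L + int ?n)"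
      by (rule sweepR_run) (use ob4 in blast)
    moreover have "(\<lambda>i. if L \<le> i \<and> i < L + int ?n
        then fst (snd (sim_delta M (D4 i) (T1 i))) else T1 i) = T4"
      unfolding nE(1) T4_def D4_def by (rule ext) (use nzT1 in auto)
    moreover have "D4 L = Reload 0" "D4 E = Reload 2" unfolding D4_def using ID(3) kle by auto
    ultimately show ?thesis unfolding nE by simp
  qed
  have T4E: "T4 E = blank_cell" unfolding T4_def using T1E by simp
  have st6: "sim_step M (Reload 2, T4, E) = (SweepL 0 False, T4, E - 1)"
    using T4E by (simp add: sim_step_def move_def fun_upd_idem)
  have F4: "cell_input (T4 i) = input_code i \<and> cell_sym (T4 i) = (if 0 \<le> i \<and> i < int (Suc k)
      then input_code i else 0)
        \<and> (cell_head (T4 i) \<longleftrightarrow> i = 0) \<and> \<not> cell_left (T4 i) \<and> (cell_spent (T4 i) \<longleftrightarrow> 0 \<le> i \<and> i < int ?s + 1)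
        \<and> (cell_origin (T4 i) \<longleftrightarrow> i = 0) \<and> (cell_in_prefix (T4 i) \<longleftrightarrow> 0 \<le> i \<and> i < int (Suc k))
            \<and> cell_touched (T4 i)"
    if i: "L \<le> i" "i < E" for i
  proof -
    have f: "cell_input (T1 i) = input_code i \<and> (cell_spent (T1 i) \<longleftrightarrow> 0 \<le> i \<and> i < int ?s + 1)
        \<and> (cell_origin (T1 i) \<longleftrightarrow> i = 0) \<and> (cell_in_prefix (T1 i) \<longleftrightarrow> 0 \<le> i \<and> i < int k)
            \<and> cell_touched (T1 i)"
      using F1(2)[OF i] by blast
    show ?thesis unfolding T4_def using i f by (auto simp: reload_cell_cell)
  qed
  have nzT4: "T4 p \<noteq> blank_cell" if "L \<le> p" "p < E" for p using F4[OF that] touched_not_blank by blast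
  define T5 where "T5 = (\<lambda>i. if L \<le> i \<and> i < E then snd (sweepL_cell 0 False (T4 i)) else T4 i)"
  have st7: "(sim_step M ^^ ?n) (SweepL 0 False, T4, E - 1) = (SweepL 0 False, T5, L - 1)"
  proof -
    have "(sim_step M ^^ ?n) ((\<lambda>_. SweepL 0 False) (E - 1), T4,
        E - 1) = ((\<lambda>_. SweepL 0 False) (E - 1 - int ?n),
     (\<lambda>i. if E - 1 - int ?n < i \<and> i \<le> E - 1
         then fst (snd (sim_delta M ((\<lambda>_. SweepL 0 False) i) (T4 i))) else T4 i), E - 1 - int ?n)"
    proof (rule sweepL_run)
      fix p assume p: "E - 1 - int ?n < p" "p \<le> E - 1"
      hence pp: "L \<le> p" "p < E" using nE by auto
      show "fst (sim_delta M (SweepL 0 False) (T4 p)) = SweepL 0 False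
          \<and> snd (snd (sim_delta M (SweepL 0 False) (T4 p))) = Lft
        \<and> SweepL 0 False \<noteq> Accept \<and> SweepL 0 False \<noteq> Reject"
        using nzT4[OF pp] F4[OF pp] by (simp add: sweepL_cell_state)
    qed
    moreover have "(\<lambda>i. if E - 1 - int ?n < i \<and> i \<le> E - 1
        then fst (snd (sim_delta M ((\<lambda>_. SweepL 0 False) i) (T4 i))) else T4 i) = T5"
      unfolding nE T5_def by (rule ext) (use nzT4 in auto)
    ultimately show ?thesis unfolding nE by simp
  qed
  have T5L: "T5 (L - 1) = blank_cell" unfolding T5_def T4_def using T1L by simp
  have st8: "sim_step M (SweepL 0 False, T5, L - 1) = (step_start 0, T5, L)"
    using T5L by (simp add: sim_step_def move_def fun_upd_idem)
  have run: "(sim_step M ^^ (1 + ?n + 1 + ?n + 1 + ?n + 1 + ?n)) (step_start q, T, L)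
      = (step_start 0, T5, L)"
    unfolding funpow_1_add_four_times st1 st2 st3 st4 st5 st6 st7 st8 ..
  have mr2: "prefix_run k (Suc j) = (qq, tp(hh := b), hh + move d)"
      by (rule prefix_run_Suc[OF ID(1) mr dl])
  have TkS: "prefix_time k = Suc j"
  proof -
    have "fst (prefix_run k (Suc j)) \<in> {1,2}" using mr2 hlt by simp
    hence "prefix_time k \<le> Suc j" using halted_iff_halt_time_le[OF computes,
        of "take k w" "Suc j"] by simp
    thus ?thesis using ID(1) by simp
  qed
  have SbS: "time_before (Suc k) + 0 = time_before k + j + 1" using TkS time_before_Suc by simp
  have lt: "Suc k \<le> length w" using kle more by simp
  have ltk: "length (take (Suc k) w) = Suc k" using lt by simp
  have mr0: "prefix_run (Suc k) 0 = (0, \<lambda>i. if 0 \<le> i \<and> i < int (Suc k) then (if w ! nat i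
      then 2 else 1) else 0, 0)"
    using lt by (auto simp: run_def init_config_def min_def fun_eq_iff)
  have ins: "cell_input (T5 i) = input_code i \<and> cell_sym (T5 i) = (if 0 \<le> i \<and> i < int (Suc k)
      then (if w ! nat i then 2 else 1) else 0)
        \<and> (cell_head (T5 i) \<longleftrightarrow> i = 0) \<and> \<not> cell_left (T5 i) \<and> (cell_spent (T5 i) \<longleftrightarrow> 0 \<le> i
            \<and> i < int (time_before (Suc k) + 0))
        \<and> (cell_origin (T5 i) \<longleftrightarrow> i = 0) \<and> (cell_in_prefix (T5 i) \<longleftrightarrow> 0 \<le> i \<and> i < int (Suc k))
            \<and> (cell_input (T5 i) \<noteq> 0 \<or> cell_touched (T5 i))"
    if i: "L \<le> i" "i < E" for i
  proof -
    have f: "cell_input (T4 i) = input_code i \<and> cell_sym (T4 i) = (if 0 \<le> i \<and> i < int (Suc k)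
        then input_code i else 0)
        \<and> (cell_head (T4 i) \<longleftrightarrow> i = 0) \<and> \<not> cell_left (T4 i) \<and> (cell_spent (T4 i) \<longleftrightarrow> 0 \<le> i \<and> i < int ?s + 1)
        \<and> (cell_origin (T4 i) \<longleftrightarrow> i = 0) \<and> (cell_in_prefix (T4 i) \<longleftrightarrow> 0 \<le> i \<and> i < int (Suc k))"
            using F4[OF i] by blast
    have "0 \<le> i \<and> i < int (Suc k) \<Longrightarrow> input_code i = (if w ! nat i then 2 else 1)"
      using lt unfolding input_code_def by auto
    thus ?thesis unfolding T5_def using i f SbS by (auto simp: sweepL_cell_cell)
  qed
  have outs: "T5 i = blank_cell \<and> (if 0 \<le> i \<and> i < int (Suc k) then (if w ! nat i
      then 2 else 1) else (0::nat)) = 0"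
    if i: "i < L \<or> E \<le> i" for i
  proof -
    have "T5 i = blank_cell" unfolding T5_def T4_def using F1(1)[of i] i by auto
    moreover have "\<not> (0 \<le> i \<and> i < int (Suc k))" using i ID(3) kle by auto
    ultimately show ?thesis by simp
  qed
  have bnd: "E - L \<le> int (length w) + int (time_before (Suc k) + 0)"
    using EL ID(5) SbS by simp
  have "sim_inv (Suc k) 0 L E T5"
    unfolding sim_inv_def
    apply (rule exI[of _ 0], rule exI[of _ "\<lambda>i. if 0 \<le> i \<and> i < int (Suc k) then (if w ! nat i
        then 2 else 1) else 0"], rule exI[of _ 0])
    using mr0 prefix_time_pos[of "Suc k"] SbS more ID(3,4) EL bnd outs ins by auto (metis ins neq0_conv)
  thus ?thesis using run by blast
qed

lemma time_before_strict_mono: "a < b \<Longrightarrow> time_before a < time_before b"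
proof (induction b)
  case 0 then show ?case by simp
next
  case (Suc b)
  have "time_before b < time_before (Suc b)" using time_before_Suc[of b] prefix_time_pos[of b] by simp
  then show ?case using Suc by (cases "a = b") auto
qed

lemma time_before_mono: "a \<le> b \<Longrightarrow> time_before a \<le> time_before b"
  using time_before_strict_mono by (cases "a = b") (auto simp: less_imp_le_nat order.strict_implies_order)

lemma halted_accept_iff:
  assumes j: "j < prefix_time k" and s: "time_before k + j + 1 = length w"
      and mr: "prefix_run k (Suc j) = (qq, tp', hh')"
  shows "(qq = 1) \<longleftrightarrow> answer"
proof
  assume q1: "qq = 1"
  have "fst (prefix_run k (Suc j)) \<in> {1,2}" using mr q1 by simp
  hence "prefix_time k \<le> Suc j" by (rule iffD1[OF halted_iff_halt_time_le[OF computes,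
      of "take k w" "Suc j"]])
  hence TS: "prefix_time k = Suc j" using j by linarith
  have o: "fst (prefix_run k (Suc j)) = out_state (l (take k w))"
      using output_at_halt_time[OF computes, of "take k w"] unfolding TS .
  have "out_state (l (take k w)) = 1" using o mr q1 by simp
  hence L: "l (take k w)" by (cases "l (take k w)") (simp_all add: out_state_def)
  have "time_before (Suc k) = time_before k + prefix_time k" by (rule time_before_Suc)
  hence "time_before (Suc k) = length w" using TS s by linarith
  thus answer unfolding delayed_lf_iff using L by blast
next
  assume answer
  then obtain k' where k': "time_before (Suc k') = length w" "l (take k' w)"
      unfolding delayed_lf_iff by blast
  have SS: "time_before (Suc k) = time_before k + prefix_time k" by (rule time_before_Suc)
  have "k < Suc k'"
  proof (rule ccontr)
    assume "\<not> k < Suc k'" hence "Suc k' \<le> k" by simp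
    hence "time_before (Suc k') \<le> time_before k" by (rule time_before_mono)
    thus False using k'(1) s by linarith
  qed
  moreover have "Suc k' \<le> Suc k"
  proof (rule ccontr)
    assume "\<not> Suc k' \<le> Suc k" hence "Suc k < Suc k'" by simp
    hence "time_before (Suc k) < time_before (Suc k')" by (rule time_before_strict_mono)
    thus False using k'(1) j s SS by linarith
  qed
  ultimately have kk: "k' = k" by simp
  have TS: "prefix_time k = Suc j" using k'(1) s SS unfolding kk by linarith
  have o: "fst (prefix_run k (Suc j)) = out_state (l (take k w))"
      using output_at_halt_time[OF computes, of "take k w"] unfolding TS .
  have "l (take k w)" using k'(2) unfolding kk .
  thus "qq = 1" using o mr by (simp add: out_state_def)
qed

lemma sim_finish:
  assumes I: "sim_inv k j L R T" and mr: "prefix_run k j = (q, tp, hh)"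
    and last: "time_before k + j + 1 = length w"
  shows "\<exists>n \<le> 8 * (length w + 1).
    fst ((sim_step M ^^ n) (step_start q, T, L)) = (if answer then Accept else Reject)"
proof -
  note ID = sim_invD[OF I mr]
  obtain qq b d where dl: "delta M q (tp hh) = (qq, b, d)" by (cases "delta M q (tp hh)") auto
  define E where "E = R + (if d = Rgt \<and> hh + 1 = R then 1 else 0)"
  have "nat (E - L) \<le> 2 * length w" using E_def ID(2,3,4,5) by (auto simp: nat_le_iff)
  moreover have "fst ((sim_step M ^^ (1 + nat (E - L))) (step_start q, T, L)) = (if qq = 1
      then Accept else Reject)"
    by (rule last_step_phase[OF I mr dl E_def last])
  moreover have "(qq = 1) = answer"
    by (rule halted_accept_iff[OF ID(1) last prefix_run_Suc[OF ID(1) mr dl]])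
  ultimately show ?thesis
    by (intro exI[of _ "1 + nat (E - L)"]) auto
qed

lemma sim_advance:
  assumes I: "sim_inv k j L R T" and mr: "prefix_run k j = (q, tp, hh)"
    and more: "time_before k + j + 1 < length w"
  shows "\<exists>n k' j' L' R' T' q' tp' hh'. n \<le> 8 * (length w + 1) \<and>
    (sim_step M ^^ n) (step_start q, T, L) = (step_start q', T', L') \<and>
    sim_inv k' j' L' R' T' \<and> prefix_run k' j' = (q', tp', hh') \<and>
    time_before k' + j' = Suc (time_before k + j)"
proof -
  note ID = sim_invD[OF I mr]
  obtain qq b d where dl: "delta M q (tp hh) = (qq, b, d)" by (cases "delta M q (tp hh)") auto
  define E where "E = R + (if d = Rgt \<and> hh + 1 = R then 1 else 0)"
  have width: "nat (E - L) \<le> 2 * length w" using E_def ID(2,3,4,5) by (auto simp: nat_le_iff)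
  have mr2: "prefix_run k (Suc j) = (qq, tp(hh := b), hh + move d)"
    by (rule prefix_run_Suc[OF ID(1) mr dl])
  show ?thesis
  proof (cases "qq = 1 \<or> qq = 2")
    case True
    let ?n = "1 + nat (E - L) + 1 + nat (E - L) + 1 + nat (E - L) + 1 + nat (E - L)"
    obtain T5 where run: "(sim_step M ^^ ?n) (step_start q, T, L) = (step_start 0, T5, L)"
      and I5: "sim_inv (Suc k) 0 L E T5"
      using next_prefix_phase[OF I mr dl E_def True more] by blast
    have "fst (prefix_run k (Suc j)) \<in> {1,2}" using mr2 True by simp
    then have "prefix_time k = Suc j"
      using halted_iff_halt_time_le[OF computes] ID(1) by (simp add: le_antisym Suc_leI)
    then have "time_before (Suc k) + 0 = Suc (time_before k + j)"
      by (simp add: time_before_Suc)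
    moreover obtain tp0 hh0 where "prefix_run (Suc k) 0 = (0, tp0, hh0)"
      using run_0_state[of M "take (Suc k) w"] by (cases "prefix_run (Suc k) 0") auto
    moreover have "?n \<le> 8 * (length w + 1)" using width by simp
    ultimately show ?thesis using run I5 by blast
  next
    case False
    define L' where "L' = L - (if d = Lft \<and> hh = L then 1 else 0)"
    let ?n = "1 + nat (E - L') + 1 + nat (E - L)"
    obtain T2 where run: "(sim_step M ^^ ?n) (step_start q, T, L) = (step_start qq, T2, L')"
      and I2: "sim_inv k (Suc j) L' E T2"
      using simulated_step_phase[OF I mr dl E_def _ _ more L'_def] False by blast
    have "nat (E - L') \<le> 2 * length w + 1" using width L'_def by (auto simp: nat_le_iff)
    then have "?n \<le> 8 * (length w + 1)" using width by simp
    then show ?thesis using run I2 mr2 by fastforce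
  qed
qed

lemma sim_reaches_answer:
  "sim_inv k j L R T \<Longrightarrow> prefix_run k j = (q, tp, hh) \<Longrightarrow> length w - (time_before k + j) = r \<Longrightarrow>
   \<exists>n \<le> r * (8 * (length w + 1)).
     fst ((sim_step M ^^ n) (step_start q, T, L)) = (if answer then Accept else Reject)"
proof (induction r arbitrary: k j L R T q tp hh)
  case 0
  then show ?case using sim_invD(2)[OF 0(1,2)] by simp
next
  case (Suc r)
  show ?case
  proof (cases "time_before k + j + 1 = length w")
    case True
    then obtain n where "n \<le> 8 * (length w + 1)"
      "fst ((sim_step M ^^ n) (step_start q, T, L)) = (if answer then Accept else Reject)"
      using sim_finish[OF Suc.prems(1,2)] by blast
    then show ?thesis by (intro exI[of _ n]) auto
  next
    case False
    then have "time_before k + j + 1 < length w" using sim_invD(2)[OF Suc.prems(1,2)] by simp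
    from sim_advance[OF Suc.prems(1,2) this] obtain n k' j' L' R' T' q' tp' hh'
      where n: "n \<le> 8 * (length w + 1)"
        and run: "(sim_step M ^^ n) (step_start q, T, L) = (step_start q', T', L')"
        and I': "sim_inv k' j' L' R' T'" "prefix_run k' j' = (q', tp', hh')"
        and used: "time_before k' + j' = Suc (time_before k + j)"
      by blast
    have "length w - (time_before k' + j') = r" using used Suc.prems(3) by simp
    from Suc.IH[OF I' this] obtain n' where n': "n' \<le> r * (8 * (length w + 1))"
      and answer: "fst ((sim_step M ^^ n') (step_start q', T',
          L')) = (if answer then Accept else Reject)"
      by blast
    have "fst ((sim_step M ^^ (n' + n)) (step_start q, T, L)) = (if answer then Accept else Reject)"
      unfolding funpow_add o_apply run by (rule answer)
    moreover have "n' + n \<le> Suc r * (8 * (length w + 1))" using n n' by simp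
    ultimately show ?thesis by blast
  qed
qed

lemma start_phase:
  assumes "w \<noteq> []"
  shows "(sim_step M ^^ 2) (Start, init_tape w, 0) =
    (step_start 0, (init_tape w)(0 := (init_tape w 0)\<lparr>cell_origin := True, cell_head := True,
        cell_touched := True\<rparr>), 0)"
proof -
  have nz: "init_tape w 0 \<noteq> blank_cell" using assms by (auto simp: init_tape_def blank_cell_def)
  have z: "init_tape w (-1) = blank_cell" by (simp add: init_tape_def)
  have "sim_step M (Start, init_tape w, 0) = (SweepL 0 False,
      (init_tape w)(0 := (init_tape w 0)\<lparr>cell_origin := True, cell_head := True,
      cell_touched := True\<rparr>), -1)"
    using nz by (simp add: sim_step_def move_def)
  moreover have "sim_step M (SweepL 0 False, (init_tape w)(0 := (init_tape w 0)\<lparr>cell_origin := True,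
      cell_head := True, cell_touched := True\<rparr>), -1) =
    (step_start 0, (init_tape w)(0 := (init_tape w 0)\<lparr>cell_origin := True, cell_head := True,
        cell_touched := True\<rparr>), 0)"
    using z by (simp add: sim_step_def move_def fun_upd_idem)
  ultimately show ?thesis by (simp add: numeral_2_eq_2)
qed

lemma sim_inv_start:
  assumes "w \<noteq> []"
  shows "sim_inv 0 0 0 (int (length w)) ((init_tape w)(0 := (init_tape w 0)\<lparr>cell_origin := True,
      cell_head := True, cell_touched := True\<rparr>))"
proof -
  have mr: "prefix_run 0 0 = (0, \<lambda>_. 0, 0)" by (simp add: run_def init_config_def fun_eq_iff)
  have Sb0: "time_before 0 = 0" by (simp add: time_before_def)
  show ?thesis unfolding sim_inv_def Sb0
    apply (rule exI[of _ 0], rule exI[of _ "\<lambda>_. 0"], rule exI[of _ 0])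
    using mr prefix_time_pos[of 0] assms by (auto simp: init_tape_def blank_cell_def input_code_def)
qed

lemma delayed_lf_Nil: "w = [] \<Longrightarrow> \<not> answer"
proof
  assume w: "w = []" and answer
  then obtain k' where "time_before (Suc k') = length w" unfolding delayed_lf_iff by blast
  moreover have "Suc k' \<le> time_before (Suc k')" by (rule time_before_ge)
  ultimately show False using w by simp
qed

lemma sim_answer_time:
  "\<exists>n \<le> 17 * (length w + 1)^2.
     fst ((sim_step M ^^ n) (Start, init_tape w, 0)) = (if answer then Accept else Reject)"
proof (cases "w = []")
  case True
  have "sim_step M (Start, init_tape w, 0) = (Reject, init_tape w, 0)"
    using True by (simp add: sim_step_def init_tape_def fun_upd_idem move_def)
  hence "fst ((sim_step M ^^ 1) (Start, init_tape w, 0)) = (if answer then Accept else Reject)"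
      using delayed_lf_Nil[OF True] by simp
  thus ?thesis by (intro exI[where x = 1] conjI) (simp_all add: True)
next
  case False
  let ?T0 = "(init_tape w)(0 := (init_tape w 0)\<lparr>cell_origin := True, cell_head := True,
      cell_touched := True\<rparr>)"
  have mr: "prefix_run 0 0 = (0, \<lambda>_. 0, 0)" by (simp add: run_def init_config_def fun_eq_iff)
  have r: "length w - (time_before 0 + 0) = length w" by (simp add: time_before_def)
  obtain n where n: "n \<le> length w * (8 * (length w + 1))"
    "fst ((sim_step M ^^ n) (step_start 0, ?T0, 0)) = (if answer then Accept else Reject)"
    using sim_reaches_answer[OF sim_inv_start[OF False] mr r] by blast
  have eq: "(sim_step M ^^ (n + 2)) (Start, init_tape w, 0) = (sim_step M ^^ n) (step_start 0, ?T0, 0)"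
    unfolding funpow_add[of n 2] o_apply start_phase[OF False] ..
  have bd: "n + 2 \<le> 17 * (length w + 1)^2"
  proof -
    have "length w * (8 * (length w + 1)) + 2 \<le> 17 * (length w + 1)^2"
      by (simp add: power2_eq_square algebra_simps)
    thus ?thesis using n(1) by linarith
  qed
  have "fst ((sim_step M ^^ (n + 2)) (Start, init_tape w, 0)) = (if answer then Accept else Reject)"
      unfolding eq by (rule n(2))
  thus ?thesis by (intro exI[where x = "n + 2"], intro conjI[OF bd])
qed

end

lemma sim_tm_computes_in_time:
  assumes computes: "tm_computes M l"
  shows "tm_computes_in_time (sim_tm M) (\<lambda>n. 17 * (n + 1) ^ 2) (delayed_lf M l)"
proof -
  have wf: "wf_tm M" using computes by (simp add: tm_computes_def)
  have "fst (run (sim_tm M) w (17 * (length w + 1) ^ 2)) = out_state (delayed_lf M l w)" for w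
  proof -
    interpret delayed_sim M l w by unfold_locales (rule computes)
    obtain n where n: "n \<le> 17 * (length w + 1) ^ 2"
      and halted: "fst ((sim_step M ^^ n) (Start, init_tape w, 0)) = (if answer then Accept else Reject)"
      using sim_answer_time by blast
    obtain T h where halted: "(sim_step M ^^ n) (Start, init_tape w,
        0) = (if answer then Accept else Reject, T, h)"
      using halted by (cases "(sim_step M ^^ n) (Start, init_tape w, 0)") auto
    obtain d where d: "17 * (length w + 1) ^ 2 = d + n"
      using le_Suc_ex[OF n] by (auto simp: add.commute)
    have "(sim_step M ^^ (17 * (length w + 1) ^ 2)) (Start, init_tape w,
        0) = (if answer then Accept else Reject, T, h)"
      unfolding d funpow_add o_apply halted by (rule funpow_sim_step_halted) simp
    then show ?thesis
      unfolding run_sim_tm[OF wf] by (simp add: enc_config_def out_state_def)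
  qed
  then show ?thesis unfolding tm_computes_in_time_def using wf_sim_tm[OF wf] by blast
qed

lemma poly_time_imp_computable: "poly_time_computable_lf l \<Longrightarrow> computable_lf l"
  unfolding poly_time_computable_lf_def computable_lf_def tm_computes_in_time_def tm_computes_def
  by blast

theorem mainTheorem1:
  fixes X :: "nat \<Rightarrow> bool"
  shows "(\<exists>l. computable_lf l \<and> uniformly_weakly_detects l X) \<longleftrightarrow>
         (\<exists>l. poly_time_computable_lf l \<and> uniformly_weakly_detects l X)"
proof
  assume "\<exists>l. computable_lf l \<and> uniformly_weakly_detects l X"
  then obtain l M where computes: "tm_computes M l" and detects: "uniformly_weakly_detects l X"
    unfolding computable_lf_def by blast
  have "poly_time_computable_lf (delayed_lf M l)"
    unfolding poly_time_computable_lf_def using sim_tm_computes_in_time[OF computes] by blast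
  moreover have "uniformly_weakly_detects (delayed_lf M l) X"
    using strict_mono_imp_inj_on[OF strict_mono_delay_index[OF computes]]
      delayed_lf_yes_set[OF computes] detects
    by (rule uniformly_weakly_detects_reindex)
  ultimately show "\<exists>l. poly_time_computable_lf l \<and> uniformly_weakly_detects l X" by blast
next
  assume "\<exists>l. poly_time_computable_lf l \<and> uniformly_weakly_detects l X"
  then show "\<exists>l. computable_lf l \<and> uniformly_weakly_detects l X"
    using poly_time_imp_computable by blast
qed

end
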